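(* In the setting below, the intrinsic angular momentum of the cluster satisfies, as $t\nearrow T$, $$\mu^0_{\mathcal G}(t)=O(|T-t|^{7/3}),\qquad \dot\mu^0_{\mathcal G}(t)=O(|T-t|^{4/3}).$$
   Context: Setting: let $d\in\{2,3\}$, $n\ge2$, masses $m_1,\dots,m_n>0$, and let $q(t)=(q_1(t),\dots,q_n(t))$, $q_i(t)\in\mathbb{R}^d$, be a solution on $[t_0,T)$ of $m_i\ddot q_i=\partial U/\partial q_i$, $U(q)=\sum_{i<j}m_im_j/|q_i-q_j|$, with $q_i(t)\ne q_j(t)$ for $i\ne j$, $t<T$, such that every limit $L_i=\lim_{t\nearrow T}q_i(t)$ exists. Let $\mathcal G\subset\{1,\dots,n\}$ be a cluster with at least two elements: $L_i=L_j=:L_{\mathcal G}$ for $i,j\in\mathcal G$ and $L_j\neq L_{\mathcal G}$ for $j\notin\mathcal G$. $c_{\mathcal G}=(\sum_{i\in\mathcal G}m_i)^{-1}\sum_{i\in\mathcal G}m_iq_i$ and $\mu^0_{\mathcal G}=\sum_{i\in\mathcal G}m_i(q_i-c_{\mathcal G})\times(\dot q_i-\dot c_{\mathcal G})$, where for $d=2$, $a\times b=a_1b_2-a_2b_1$ and for $d=3$ it is the vector product. *)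

theory Defs
  imports "HOL-Analysis.Analysis" "HOL-Library.Landau_Symbols"
begin

text \<open>Planar cross product (d = 2): a scalar. For d = 3 we use the library's cross3.\<close>
definition cross2 :: "real^2 \<Rightarrow> real^2 \<Rightarrow> real" where
  "cross2 a b = a$1 * b$2 - a$2 * b$1"

definition nbU :: "nat \<Rightarrow> (nat \<Rightarrow> real) \<Rightarrow> (nat \<Rightarrow> 'a::real_normed_vector) \<Rightarrow> real" where
  "nbU n m x = (\<Sum>i\<in>{1..n}. \<Sum>j\<in>{i<..n}. m i * m j / dist (x i) (x j))"

text \<open>The setting: q is a collision-free solution on [t0,T) of m_i q_i'' = dU/dq_i with
  velocity qd, all limits L_i exist as t tends to T from the left, and G is a cluster
  with at least two elements.\<close>
definition nb_cluster_setting ::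
  "nat \<Rightarrow> (nat \<Rightarrow> real) \<Rightarrow> real \<Rightarrow> real \<Rightarrow> (real \<Rightarrow> nat \<Rightarrow> 'a::euclidean_space)
    \<Rightarrow> (real \<Rightarrow> nat \<Rightarrow> 'a) \<Rightarrow> nat set \<Rightarrow> bool" where
  "nb_cluster_setting n m t0 T q qd G \<longleftrightarrow>
     n \<ge> 2 \<and> (\<forall>i\<in>{1..n}. m i > 0) \<and> t0 < T \<and>
     (\<forall>t\<in>{t0..<T}. \<forall>i\<in>{1..n}. \<forall>j\<in>{1..n}. i \<noteq> j \<longrightarrow> q t i \<noteq> q t j) \<and>
     (\<exists>qdd. \<forall>t\<in>{t0..<T}. \<forall>i\<in>{1..n}.
        ((\<lambda>s. q s i) has_vector_derivative qd t i) (at t within {t0..<T}) \<and>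
        ((\<lambda>s. qd s i) has_vector_derivative qdd t i) (at t within {t0..<T}) \<and>
        ((\<lambda>x. nbU n m ((q t)(i := x))) has_derivative (\<lambda>h. (m i *\<^sub>R qdd t i) \<bullet> h))
           (at (q t i))) \<and>
     (\<forall>i\<in>{1..n}. \<exists>L. ((\<lambda>t. q t i) \<longlongrightarrow> L) (at_left T)) \<and>
     G \<subseteq> {1..n} \<and> card G \<ge> 2 \<and>
     (\<exists>LG. (\<forall>i\<in>G. ((\<lambda>t. q t i) \<longlongrightarrow> LG) (at_left T)) \<and>
           (\<forall>j\<in>{1..n} - G. \<not> ((\<lambda>t. q t j) \<longlongrightarrow> LG) (at_left T)))"

definition cmass :: "(nat \<Rightarrow> real) \<Rightarrow> nat set \<Rightarrow> (nat \<Rightarrow> 'a::real_vector) \<Rightarrow> 'a" where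
  "cmass m G x = (1 / (\<Sum>i\<in>G. m i)) *\<^sub>R (\<Sum>i\<in>G. m i *\<^sub>R x i)"

definition ang_mom0 ::
  "('a \<Rightarrow> 'a \<Rightarrow> 'b::real_vector) \<Rightarrow> (nat \<Rightarrow> real) \<Rightarrow> nat set
    \<Rightarrow> (real \<Rightarrow> nat \<Rightarrow> 'a::real_vector) \<Rightarrow> (real \<Rightarrow> nat \<Rightarrow> 'a) \<Rightarrow> real \<Rightarrow> 'b" where
  "ang_mom0 cr m G q qd t =
     (\<Sum>i\<in>G. m i *\<^sub>R cr (q t i - cmass m G (q t)) (qd t i - cmass m G (qd t)))"

end

theory Submission
  imports Defs
begin

text \<open>Sundman's method, applied twice. For the whole system, the moment of inertia \<open>J\<close> about the
  limit configuration obeys the Lagrange-Jacobi identity \<open>J'' = 2 (2 K) - 2 U + O(1)\<close> and Sundman's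
  inequality \<open>J'\<^sup>2 \<le> 4 J (2 K)\<close>. Since \<open>U \<rightarrow> \<infinity>\<close>, \<open>J\<close> is eventually convex and decreasing, and the
  functional \<open>J'\<^sup>2 / \<surd>J + c \<surd>J\<close> is nonincreasing, which integrates to \<open>J = O((T - t)\<^bsup>4/3\<^esup>)\<close>.

  The internal forces of the cluster exert no torque about its centre of mass, so \<open>\<mu>\<^sup>0'\<close> is the torque
  of the tidal forces of the outer bodies, which is \<open>O(|\<rho>|\<^sup>2) = O(J) = O((T - t)\<^bsup>4/3\<^esup>)\<close>. Hence
  \<open>\<mu>\<^sup>0\<close> converges; a nonzero limit would make Sundman's inequality for the cluster give its moment of
  inertia \<open>I\<close> a defect \<open>2 I I'' - I'\<^sup>2/2 \<ge> 2 |\<mu>\<^sup>0|\<^sup>2 - c I\<close> bounded below by a positive constant, which is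
  incompatible with \<open>I \<rightarrow> 0\<close>. So \<open>\<mu>\<^sup>0 \<rightarrow> 0\<close>, and integrating the bound on \<open>\<mu>\<^sup>0'\<close> from \<open>t\<close> to \<open>T\<close> gives
  \<open>\<mu>\<^sup>0 = O((T - t)\<^bsup>7/3\<^esup>)\<close>.\<close>

section \<open>Differential inequalities near a collapse\<close>

lemma eventually_at_left_imp_interval:
  fixes a b :: real
  assumes "eventually P (at_left b)" "a < b"
  shows "\<exists>s. a \<le> s \<and> s < b \<and> (\<forall>t\<in>{s<..<b}. P t)"
proof -
  from assms(1) obtain s' where "s' < b" and P: "\<And>y. s' < y \<Longrightarrow> y < b \<Longrightarrow> P y"
    by (auto simp: eventually_at_left_field)
  then show ?thesis using assms(2) by (intro exI[of _ "max a s'"]) auto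
qed

lemma sundman_functional_antimono:
  fixes J J' J'' :: "real \<Rightarrow> real"
  assumes J': "\<And>t. t \<in> {a<..<b} \<Longrightarrow> (J has_real_derivative J' t) (at t)"
    and J'': "\<And>t. t \<in> {a<..<b} \<Longrightarrow> (J' has_real_derivative J'' t) (at t)"
    and pos: "\<And>t. t \<in> {a<..<b} \<Longrightarrow> J t > 0"
    and nonpos: "\<And>t. t \<in> {a<..<b} \<Longrightarrow> J' t \<le> 0"
    and defect: "\<And>t. t \<in> {a<..<b} \<Longrightarrow> 2 * J t * J'' t - J' t ^ 2 / 2 \<ge> e - c * J t"
    and st: "a < s" "s \<le> t" "t < b"
  shows "(J' t ^ 2 + 2 * e) / sqrt (J t) + 2 * c * sqrt (J t)
       \<le> (J' s ^ 2 + 2 * e) / sqrt (J s) + 2 * c * sqrt (J s)"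
proof -
  define \<Phi> where "\<Phi> x = (J' x ^ 2 + 2 * e) / sqrt (J x) + 2 * c * sqrt (J x)" for x
  define \<Phi>' where "\<Phi>' x = J' x * (2 * J x * J'' x - J' x ^ 2 / 2 - e + c * J x) / sqrt (J x) ^ 3" for x
  have deriv: "(\<Phi> has_real_derivative \<Phi>' x) (at x)" if x: "x \<in> {a<..<b}" for x
  proof -
    define r where "r = sqrt (J x)"
    have r: "r > 0" "J x = r\<^sup>2" using pos[OF x] by (auto simp: r_def)
    have sq: "((\<lambda>y. sqrt (J y)) has_real_derivative J' x / (2 * sqrt (J x))) (at x)"
      using DERIV_chain2[OF DERIV_real_sqrt[OF pos[OF x]] J'[OF x]] by (simp add: field_simps)
    have "((\<lambda>y. J' y ^ 2 + 2 * e) has_real_derivative 2 * J' x * J'' x) (at x)"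
      using J''[OF x] by (auto intro!: derivative_eq_intros)
    then have "(\<Phi> has_real_derivative
        (2 * J' x * J'' x * sqrt (J x) - (J' x ^ 2 + 2 * e) * (J' x / (2 * sqrt (J x)))) / (sqrt (J x) * sqrt (J x))
        + 2 * c * (J' x / (2 * sqrt (J x)))) (at x)"
      unfolding \<Phi>_def using pos[OF x] by (intro DERIV_add DERIV_divide[OF \<open>((\<lambda>y. J' y ^ 2 + 2 * e) has_real_derivative _) _\<close> sq] DERIV_cmult[OF sq]) auto
    also have "(2 * J' x * J'' x * sqrt (J x) - (J' x ^ 2 + 2 * e) * (J' x / (2 * sqrt (J x)))) / (sqrt (J x) * sqrt (J x))
        + 2 * c * (J' x / (2 * sqrt (J x))) = \<Phi>' x"
      unfolding \<Phi>'_def r_def[symmetric] r(2) using r(1)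
      by (simp add: field_simps power2_eq_square power3_eq_cube)
    finally show ?thesis .
  qed
  have nonpos': "\<Phi>' x \<le> 0" if x: "x \<in> {a<..<b}" for x
    unfolding \<Phi>'_def using nonpos[OF x] defect[OF x] pos[OF x]
    by (intro divide_nonpos_pos mult_nonpos_nonneg) auto
  then have "\<Phi> t \<le> \<Phi> s"
  proof (intro DERIV_nonpos_imp_decreasing_open[OF st(2)] continuous_at_imp_continuous_on ballI exI conjI)
    fix x assume "s < x" "x < t"
    then have "x \<in> {a<..<b}" using st by auto
    then show "(\<Phi> has_real_derivative \<Phi>' x) (at x)" "\<Phi>' x \<le> 0" using deriv nonpos' by auto
  next
    fix x assume "x \<in> {s..t}"
    then have "x \<in> {a<..<b}" using st by auto
    then show "isCont \<Phi> x" using deriv DERIV_isCont by blast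
  qed
  then show ?thesis by (simp add: \<Phi>_def)
qed

lemma deriv_nonpos_of_convex_tendsto_0:
  fixes J J' J'' :: "real \<Rightarrow> real"
  assumes J': "\<And>t. t \<in> {a<..<b} \<Longrightarrow> (J has_real_derivative J' t) (at t)"
    and J'': "\<And>t. t \<in> {a<..<b} \<Longrightarrow> (J' has_real_derivative J'' t) (at t)"
    and pos: "\<And>t. t \<in> {a<..<b} \<Longrightarrow> J t > 0"
    and convex: "\<And>t. t \<in> {a<..<b} \<Longrightarrow> J'' t \<ge> 0"
    and lim: "(J \<longlongrightarrow> 0) (at_left b)"
    and t: "t \<in> {a<..<b}"
  shows "J' t \<le> 0"
proof (rule ccontr)
  assume "\<not> J' t \<le> 0"
  have "J t \<le> J x" if x: "x \<in> {t<..<b}" for x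
  proof (rule deriv_nonneg_imp_mono[where g=J and g'=J' and a=t and b=x])
    fix y assume y: "y \<in> {t..x}"
    then show "(J has_real_derivative J' y) (at y)" using t x by (intro J') auto
  next
    fix y assume y: "y \<in> {t..x}"
    have "J' t \<le> J' y"
      using t x y by (intro deriv_nonneg_imp_mono[where g=J' and g'=J'' and a=t and b=y] J'' convex) auto
    then show "J' y \<ge> 0" using \<open>\<not> J' t \<le> 0\<close> by simp
  qed (use x in auto)
  moreover have "eventually (\<lambda>x. x \<in> {t<..<b}) (at_left b)"
    using t by (intro eventually_at_left_real) auto
  ultimately have "eventually (\<lambda>x. J t \<le> J x) (at_left b)"
    by (auto elim!: eventually_mono)
  then have "J t \<le> 0"
    by (rule tendsto_lowerbound[OF lim]) simp
  then show False using pos[OF t] by simp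
qed

lemma tendsto_0_rate_of_deriv_bound:
  fixes J J' :: "real \<Rightarrow> real"
  assumes J': "\<And>t. t \<in> {a<..<b} \<Longrightarrow> (J has_real_derivative J' t) (at t)"
    and pos: "\<And>t. t \<in> {a<..<b} \<Longrightarrow> J t > 0"
    and bound: "\<And>t. t \<in> {a<..<b} \<Longrightarrow> J' t ^ 2 \<le> B * sqrt (J t)"
    and lim: "(J \<longlongrightarrow> 0) (at_left b)"
    and t: "t \<in> {a<..<b}"
  shows "J t \<le> (3/4 * sqrt B * (b - t)) powr (4/3)"
proof -
  define k where "k = 3/4 * sqrt B"
  define \<psi> where "\<psi> x = J x powr (3/4) + k * x" for x
  have deriv: "(\<psi> has_real_derivative (3/4) * J x powr (3/4 - 1) * J' x + k) (at x)"
    if x: "x \<in> {a<..<b}" for x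
    unfolding \<psi>_def using J'[OF x] pos[OF x] by (auto intro!: derivative_eq_intros)
  \<comment> \<open>the bound on \<open>J'\<close> says exactly that \<open>(J powr (3/4))' \<ge> - k\<close>\<close>
  have "(3/4) * J x powr (3/4 - 1) * J' x + k \<ge> 0" if x: "x \<in> {a<..<b}" for x
  proof -
    have Jx: "J x > 0" using pos[OF x] by auto
    have "\<bar>J' x\<bar> = sqrt (J' x ^ 2)" by simp
    also have "\<dots> \<le> sqrt (B * sqrt (J x))" using bound[OF x] by (rule real_sqrt_le_mono)
    also have "\<dots> = sqrt B * J x powr (1/4)"
      using Jx by (simp add: real_sqrt_mult powr_half_sqrt[symmetric] powr_powr)
    finally have "J x powr (3/4 - 1) * (- J' x) \<le> J x powr (3/4 - 1) * (sqrt B * J x powr (1/4))"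
      by (intro mult_left_mono) auto
    also have "\<dots> = sqrt B"
      using Jx by (simp add: powr_add[symmetric])
    finally show ?thesis unfolding k_def by (simp add: algebra_simps)
  qed
  then have "\<psi> t \<le> \<psi> y" if y: "y \<in> {t..<b}" for y
    using t y deriv by (intro deriv_nonneg_imp_mono[where a=t and b=y and g=\<psi> and g'="\<lambda>x. (3/4) * J x powr (3/4 - 1) * J' x + k"]) auto
  moreover have "eventually (\<lambda>y. y \<in> {t<..<b}) (at_left b)"
    using t by (intro eventually_at_left_real) auto
  ultimately have ev: "eventually (\<lambda>y. \<psi> t \<le> \<psi> y) (at_left b)"
    by (auto elim!: eventually_mono)
  have "eventually (\<lambda>x. 0 \<le> J x) (at_left b)"
    using eventually_at_left_real[of a b] t by (auto elim!: eventually_mono simp: less_imp_le[OF pos])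
  then have "(\<psi> \<longlongrightarrow> 0 + k * b) (at_left b)"
    unfolding \<psi>_def[abs_def] by (intro tendsto_intros tendsto_zero_powrI[OF lim]) auto
  then have "\<psi> t \<le> 0 + k * b"
    using ev by (rule tendsto_lowerbound) simp
  then have "J t powr (3/4) \<le> k * (b - t)" unfolding \<psi>_def by (simp add: algebra_simps)
  have "J t = (J t powr (3/4)) powr (4/3)" using pos[OF t] by (simp add: powr_powr)
  also have "\<dots> \<le> (k * (b - t)) powr (4/3)" by (rule powr_mono2) (use \<open>J t powr (3/4) \<le> k * (b - t)\<close> in auto)
  finally show ?thesis by (simp add: k_def)
qed

lemma collapse_rate:
  fixes J J' J'' :: "real \<Rightarrow> real"
  assumes J': "\<And>t. t \<in> {a<..<b} \<Longrightarrow> (J has_real_derivative J' t) (at t)"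
    and J'': "\<And>t. t \<in> {a<..<b} \<Longrightarrow> (J' has_real_derivative J'' t) (at t)"
    and pos: "\<And>t. t \<in> {a<..<b} \<Longrightarrow> J t > 0"
    and convex: "\<And>t. t \<in> {a<..<b} \<Longrightarrow> J'' t \<ge> 0"
    and defect: "\<And>t. t \<in> {a<..<b} \<Longrightarrow> 2 * J t * J'' t - J' t ^ 2 / 2 \<ge> - c * J t"
    and c: "c \<ge> 0" and lim: "(J \<longlongrightarrow> 0) (at_left b)" and "a < b"
  shows "\<exists>K\<ge>0. eventually (\<lambda>t. J t \<le> K * (b - t) powr (4/3)) (at_left b)"
proof -
  define s where "s = (a + b) / 2"
  have s: "a < s" "s < b" using \<open>a < b\<close> by (auto simp: s_def)
  have sub: "t \<in> {a<..<b}" if "t \<in> {s<..<b}" for t using that s by auto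
  have nonpos: "J' t \<le> 0" if "t \<in> {a<..<b}" for t
    by (rule deriv_nonpos_of_convex_tendsto_0[OF J' J'' pos convex lim that])
  define B where "B = J' s ^ 2 / sqrt (J s) + 2 * c * sqrt (J s)"
  have B: "B \<ge> 0" using c pos[of s] s by (simp add: B_def)
  have bound: "J' t ^ 2 \<le> B * sqrt (J t)" if t: "t \<in> {s<..<b}" for t
  proof -
    have "(J' t ^ 2 + 2 * 0) / sqrt (J t) + 2 * c * sqrt (J t)
        \<le> (J' s ^ 2 + 2 * 0) / sqrt (J s) + 2 * c * sqrt (J s)"
      using t s defect by (intro sundman_functional_antimono[OF J' J'' pos nonpos]) auto
    moreover have "0 \<le> 2 * c * sqrt (J t)" using c pos[OF sub[OF t]] by simp
    ultimately have "J' t ^ 2 / sqrt (J t) \<le> B" by (simp add: B_def)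
    then show ?thesis using pos[OF sub[OF t]] by (simp add: divide_le_eq)
  qed
  define K where "K = (3/4 * sqrt B) powr (4/3)"
  have "J t \<le> K * (b - t) powr (4/3)" if t: "t \<in> {s<..<b}" for t
  proof -
    have "J t \<le> (3/4 * sqrt B * (b - t)) powr (4/3)"
      by (rule tendsto_0_rate_of_deriv_bound[OF J'[OF sub] pos[OF sub] bound lim t])
    also have "\<dots> = K * (b - t) powr (4/3)"
      unfolding K_def using t B by (subst powr_mult) auto
    finally show ?thesis .
  qed
  then have "eventually (\<lambda>t. J t \<le> K * (b - t) powr (4/3)) (at_left b)"
    using eventually_at_left_real[OF s(2)] by (auto elim!: eventually_mono)
  then show ?thesis by (intro exI[of _ K]) (simp add: K_def)
qed

lemma filterlim_divide_sqrt_at_top: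
  fixes J :: "real \<Rightarrow> real"
  assumes "(J \<longlongrightarrow> 0) F" "eventually (\<lambda>t. J t > 0) F" "e > 0"
  shows "filterlim (\<lambda>t. e / sqrt (J t)) at_top F"
proof -
  have "((\<lambda>t. sqrt (J t)) \<longlongrightarrow> 0) F" using tendsto_real_sqrt[OF assms(1)] by simp
  moreover have "eventually (\<lambda>t. 0 < sqrt (J t)) F"
    using assms(2) by (rule eventually_mono) simp
  ultimately have "filterlim (\<lambda>t. inverse (sqrt (J t))) at_top F"
    by (intro filterlim_inverse_at_top)
  then have "filterlim (\<lambda>t. e * inverse (sqrt (J t))) at_top F"
    using assms(3) by (intro filterlim_tendsto_pos_mult_at_top[OF tendsto_const]) auto
  then show ?thesis unfolding divide_inverse .
qed

lemma no_collapse_of_positive_defect: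
  fixes J J' J'' :: "real \<Rightarrow> real"
  assumes J': "\<And>t. t \<in> {a<..<b} \<Longrightarrow> (J has_real_derivative J' t) (at t)"
    and J'': "\<And>t. t \<in> {a<..<b} \<Longrightarrow> (J' has_real_derivative J'' t) (at t)"
    and pos: "\<And>t. t \<in> {a<..<b} \<Longrightarrow> J t > 0"
    and defect: "\<And>t. t \<in> {a<..<b} \<Longrightarrow> 2 * J t * J'' t - J' t ^ 2 / 2 \<ge> e - c * J t"
    and e: "e > 0" and lim: "(J \<longlongrightarrow> 0) (at_left b)" and "a < b"
  shows False
proof -
  have "((\<lambda>t. c * J t) \<longlongrightarrow> c * 0) (at_left b)" by (intro tendsto_intros lim)
  then have "eventually (\<lambda>t. c * J t < e / 2) (at_left b)"
    by (rule order_tendstoD(2)) (use e in simp)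
  then have "eventually (\<lambda>t. c * J t < e / 2 \<and> t \<in> {a<..<b}) (at_left b)"
    using eventually_at_left_real[OF \<open>a < b\<close>] by (rule eventually_conj)
  then obtain a' where a': "a' < b" and small: "\<And>t. t \<in> {a'<..<b} \<Longrightarrow> c * J t < e / 2 \<and> t \<in> {a<..<b}"
    by (auto simp: eventually_at_left_field)
  define s where "s = (a' + b) / 2"
  have s: "a' < s" "s < b" using a' by (auto simp: s_def)
  have sub: "t \<in> {a<..<b}" if "t \<in> {a'<..<b}" for t using small[OF that] by simp
  \<comment> \<open>close to the collapse the defect is at least \<open>e / 2\<close>, which forces convexity\<close>
  have defect': "2 * J t * J'' t - J' t ^ 2 / 2 \<ge> e / 2 - 0 * J t" if t: "t \<in> {a'<..<b}" for t
    using defect[OF sub[OF t]] small[OF t] by simp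
  have convex: "J'' t \<ge> 0" if t: "t \<in> {a'<..<b}" for t
  proof -
    have "2 * J t * J'' t > 0" using defect'[OF t] e zero_le_power2[of "J' t"] by linarith
    then show ?thesis using pos[OF sub[OF t]] by (simp add: zero_less_mult_iff)
  qed
  have nonpos: "J' t \<le> 0" if "t \<in> {a'<..<b}" for t
    by (rule deriv_nonpos_of_convex_tendsto_0[OF J'[OF sub] J''[OF sub] pos[OF sub] convex lim that])
  define B where "B = (J' s ^ 2 + 2 * (e / 2)) / sqrt (J s)"
  have bounded: "eventually (\<lambda>t. e / 2 / sqrt (J t) \<le> B) (at_left b)"
  proof (rule eventually_mono[OF eventually_at_left_real[OF s(2)]])
    fix t assume t: "t \<in> {s<..<b}"
    have "(J' t ^ 2 + 2 * (e / 2)) / sqrt (J t) + 2 * 0 * sqrt (J t)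
        \<le> (J' s ^ 2 + 2 * (e / 2)) / sqrt (J s) + 2 * 0 * sqrt (J s)"
      using t s by (intro sundman_functional_antimono[OF J'[OF sub] J''[OF sub] pos[OF sub] nonpos defect']) auto
    moreover have "e / 2 / sqrt (J t) \<le> (J' t ^ 2 + 2 * (e / 2)) / sqrt (J t)"
      using e less_imp_le[OF pos[OF sub]] t s by (intro divide_right_mono) auto
    ultimately show "e / 2 / sqrt (J t) \<le> B" by (simp add: B_def)
  qed
  have "eventually (\<lambda>t. J t > 0) (at_left b)"
    using eventually_at_left_real[OF \<open>a < b\<close>] by (rule eventually_mono) (simp add: pos)
  with lim e have "filterlim (\<lambda>t. (e / 2) / sqrt (J t)) at_top (at_left b)"
    by (intro filterlim_divide_sqrt_at_top) auto
  then have "eventually (\<lambda>t. B + 1 \<le> e / 2 / sqrt (J t)) (at_left b)"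
    by (simp add: filterlim_at_top)
  with bounded have "eventually (\<lambda>t. False) (at_left b)"
    by eventually_elim simp
  then show False by (simp add: trivial_limit_at_left_real)
qed

lemma norm_diff_le_of_vector_derivative_bound:
  fixes f :: "real \<Rightarrow> 'a::real_inner"
  assumes "a \<le> b" and cont: "continuous_on {a..b} f"
    and f': "\<And>x. x \<in> {a<..<b} \<Longrightarrow> (f has_vector_derivative f' x) (at x)"
    and bound: "\<And>x. x \<in> {a<..<b} \<Longrightarrow> norm (f' x) \<le> B"
  shows "norm (f b - f a) \<le> B * (b - a)"
proof (cases "a = b")
  case False
  then have "a < b" using \<open>a \<le> b\<close> by simp
  obtain x where x: "x \<in> {a<..<b}" and le: "norm (f b - f a) \<le> norm ((b - a) *\<^sub>R f' x)"
    using mvt_general[OF \<open>a < b\<close> cont, of "\<lambda>x h. h *\<^sub>R f' x"] f'[unfolded has_vector_derivative_def]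
    by force
  have "norm ((b - a) *\<^sub>R f' x) = (b - a) * norm (f' x)" using \<open>a < b\<close> by simp
  also have "\<dots> \<le> (b - a) * B" using bound[OF x] \<open>a < b\<close> by (intro mult_left_mono) auto
  finally have "norm ((b - a) *\<^sub>R f' x) \<le> (b - a) * B" .
  then show ?thesis using le by (simp add: mult.commute)
qed simp

lemma tail_oscillation_bound:
  fixes f :: "real \<Rightarrow> 'a::real_inner"
  assumes f': "\<And>x. x \<in> {a<..<b} \<Longrightarrow> (f has_vector_derivative f' x) (at x)"
    and bound: "\<And>x. x \<in> {a<..<b} \<Longrightarrow> norm (f' x) \<le> C * (b - x) powr p"
    and "C \<ge> 0" "p \<ge> 0" and t: "a < t" "t \<le> t'" "t' < b"
  shows "norm (f t' - f t) \<le> C * (b - t) powr (p + 1)"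
proof -
  have "norm (f t' - f t) \<le> C * (b - t) powr p * (t' - t)"
  proof (rule norm_diff_le_of_vector_derivative_bound[OF t(2)])
    show "continuous_on {t..t'} f"
    proof (intro continuous_at_imp_continuous_on ballI)
      fix x assume "x \<in> {t..t'}"
      then have "x \<in> {a<..<b}" using t by auto
      from f'[OF this] show "isCont f x" by (rule has_vector_derivative_continuous)
    qed
  next
    fix x assume x: "x \<in> {t<..<t'}"
    show "(f has_vector_derivative f' x) (at x)" using x t by (intro f') auto
    have "C * (b - x) powr p \<le> C * (b - t) powr p"
      using x t \<open>C \<ge> 0\<close> \<open>p \<ge> 0\<close> by (intro mult_left_mono powr_mono2) auto
    then show "norm (f' x) \<le> C * (b - t) powr p" using bound[of x] x t by force
  qed
  also have "\<dots> \<le> C * (b - t) powr p * (b - t)"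
    using t \<open>C \<ge> 0\<close> by (intro mult_left_mono) auto
  also have "\<dots> = C * (b - t) powr (p + 1)"
    using t by (simp add: powr_add)
  finally show ?thesis .
qed

lemma tendsto_0_of_tail_oscillation:
  fixes f :: "real \<Rightarrow> 'a::real_inner"
  assumes f': "\<And>x. x \<in> {a<..<b} \<Longrightarrow> (f has_vector_derivative f' x) (at x)"
    and bound: "\<And>x. x \<in> {a<..<b} \<Longrightarrow> norm (f' x) \<le> C * (b - x) powr p"
    and "C \<ge> 0" "p \<ge> 0" "a < b"
    and recurrent: "\<And>\<epsilon> s. \<epsilon> > 0 \<Longrightarrow> a < s \<Longrightarrow> s < b \<Longrightarrow> \<exists>x\<in>{s<..<b}. norm (f x) < \<epsilon>"
  shows "(f \<longlongrightarrow> 0) (at_left b)"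
proof (rule tendstoI)
  fix e :: real assume "e > 0"
  have "((\<lambda>t. b - t) \<longlongrightarrow> 0) (at_left b)"
    using tendsto_diff[OF tendsto_const[of b] tendsto_ident_at[of b "{..<b}"]] by simp
  moreover have "eventually (\<lambda>t. 0 \<le> b - t) (at_left b)"
    using eventually_at_left_real[OF \<open>a < b\<close>] by (rule eventually_mono) simp
  ultimately have "((\<lambda>t. C * (b - t) powr (p + 1)) \<longlongrightarrow> C * 0) (at_left b)"
    using \<open>p \<ge> 0\<close> by (intro tendsto_mult tendsto_const tendsto_zero_powrI) auto
  then have "eventually (\<lambda>t. C * (b - t) powr (p + 1) < e / 2) (at_left b)"
    by (rule order_tendstoD(2)) (use \<open>e > 0\<close> in simp)
  then have "eventually (\<lambda>t. C * (b - t) powr (p + 1) < e / 2 \<and> t \<in> {a<..<b}) (at_left b)"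
    using eventually_at_left_real[OF \<open>a < b\<close>] by (rule eventually_conj)
  then show "eventually (\<lambda>t. dist (f t) 0 < e) (at_left b)"
  proof (rule eventually_mono)
    fix t assume t: "C * (b - t) powr (p + 1) < e / 2 \<and> t \<in> {a<..<b}"
    then obtain x where x: "x \<in> {t<..<b}" "norm (f x) < e / 2"
      using recurrent[of "e / 2" t] \<open>e > 0\<close> by auto
    have "norm (f x - f t) \<le> C * (b - t) powr (p + 1)"
      using t x by (intro tail_oscillation_bound[OF f' bound \<open>C \<ge> 0\<close> \<open>p \<ge> 0\<close>]) auto
    then show "dist (f t) 0 < e"
      using x t norm_triangle_sub[of "f t" "f x"] by (simp add: norm_minus_commute)
  qed
qed

lemma norm_le_tail_of_tendsto_0:
  fixes f :: "real \<Rightarrow> 'a::real_inner"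
  assumes f': "\<And>x. x \<in> {a<..<b} \<Longrightarrow> (f has_vector_derivative f' x) (at x)"
    and bound: "\<And>x. x \<in> {a<..<b} \<Longrightarrow> norm (f' x) \<le> C * (b - x) powr p"
    and "C \<ge> 0" "p \<ge> 0" and lim: "(f \<longlongrightarrow> 0) (at_left b)" and t: "t \<in> {a<..<b}"
  shows "norm (f t) \<le> C * (b - t) powr (p + 1)"
proof -
  have "eventually (\<lambda>x. norm (f t) - C * (b - t) powr (p + 1) \<le> norm (f x)) (at_left b)"
  proof (rule eventually_mono[OF eventually_at_left_real[of t b]])
    fix x assume x: "x \<in> {t<..<b}"
    have "norm (f x - f t) \<le> C * (b - t) powr (p + 1)"
      using t x by (intro tail_oscillation_bound[OF f' bound \<open>C \<ge> 0\<close> \<open>p \<ge> 0\<close>]) auto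
    then show "norm (f t) - C * (b - t) powr (p + 1) \<le> norm (f x)"
      using norm_triangle_sub[of "f t" "f x"] by (simp add: norm_minus_commute)
  qed (use t in auto)
  with tendsto_norm_zero[OF lim] have "norm (f t) - C * (b - t) powr (p + 1) \<le> 0"
    by (rule tendsto_lowerbound) simp
  then show ?thesis by simp
qed

lemma bigo_at_left_of_eventually_le:
  fixes f :: "real \<Rightarrow> 'a::real_normed_vector"
  assumes "eventually (\<lambda>t. norm (f t) \<le> C * (b - t) powr p) (at_left b)"
  shows "(\<lambda>t. norm (f t)) \<in> O[at_left b](\<lambda>t. \<bar>b - t\<bar> powr p)"
proof (rule bigoI)
  show "eventually (\<lambda>t. norm (norm (f t)) \<le> C * norm (\<bar>b - t\<bar> powr p)) (at_left b)"
    using eventually_conj[OF assms eventually_at_left_real[of "b - 1" b]]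
    by (rule eventually_mono) auto
qed

section \<open>Weighted sums\<close>

lemma weighted_Cauchy_Schwarz:
  fixes m a b :: "nat \<Rightarrow> real"
  assumes "\<And>i. i \<in> S \<Longrightarrow> m i \<ge> 0"
  shows "(\<Sum>i\<in>S. m i * a i * b i)^2 \<le> (\<Sum>i\<in>S. m i * a i ^ 2) * (\<Sum>i\<in>S. m i * b i ^ 2)"
proof -
  have "(\<Sum>i\<in>S. (sqrt (m i) * a i) * (sqrt (m i) * b i))^2
      \<le> (\<Sum>i\<in>S. (sqrt (m i) * a i)^2) * (\<Sum>i\<in>S. (sqrt (m i) * b i)^2)"
    by (rule Cauchy_Schwarz_ineq_sum)
  moreover have "(\<Sum>i\<in>S. (sqrt (m i) * a i) * (sqrt (m i) * b i)) = (\<Sum>i\<in>S. m i * a i * b i)"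
    using assms by (intro sum.cong) (auto simp: algebra_simps)
  moreover have "(\<Sum>i\<in>S. (sqrt (m i) * c i)^2) = (\<Sum>i\<in>S. m i * c i ^ 2)" for c
    using assms by (intro sum.cong) (auto simp: power_mult_distrib)
  ultimately show ?thesis by simp
qed

lemma weighted_inner_Cauchy_Schwarz:
  fixes x v :: "nat \<Rightarrow> 'a::real_inner"
  assumes m: "\<And>i. i \<in> S \<Longrightarrow> m i \<ge> 0"
  shows "(\<Sum>i\<in>S. m i * (x i \<bullet> v i))^2 \<le> (\<Sum>i\<in>S. m i * norm (x i) ^ 2) * (\<Sum>i\<in>S. m i * norm (v i) ^ 2)"
proof -
  have "\<bar>\<Sum>i\<in>S. m i * (x i \<bullet> v i)\<bar> \<le> (\<Sum>i\<in>S. \<bar>m i * (x i \<bullet> v i)\<bar>)"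
    by (rule sum_abs)
  also have "\<dots> \<le> (\<Sum>i\<in>S. m i * norm (x i) * norm (v i))"
  proof (rule sum_mono)
    fix i assume i: "i \<in> S"
    have "\<bar>m i * (x i \<bullet> v i)\<bar> = m i * \<bar>x i \<bullet> v i\<bar>" using m[OF i] by (simp add: abs_mult)
    also have "\<dots> \<le> m i * (norm (x i) * norm (v i))"
      using m[OF i] by (intro mult_left_mono Cauchy_Schwarz_ineq2)
    finally show "\<bar>m i * (x i \<bullet> v i)\<bar> \<le> m i * norm (x i) * norm (v i)" by (simp add: mult.assoc)
  qed
  finally have "(\<Sum>i\<in>S. m i * (x i \<bullet> v i))^2 \<le> (\<Sum>i\<in>S. m i * norm (x i) * norm (v i))^2"
    by (metis abs_ge_zero power2_abs power_mono)
  also have "\<dots> \<le> (\<Sum>i\<in>S. m i * norm (x i) ^ 2) * (\<Sum>i\<in>S. m i * norm (v i) ^ 2)"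
    by (rule weighted_Cauchy_Schwarz[OF m])
  finally show ?thesis .
qed

text \<open>Sundman's inequality: \<open>cr\<close> stands for the cross product, and the hypothesis \<open>lagrange\<close>
  is Lagrange's identity \<open>(x \<bullet> v)\<^sup>2 + |x \<times> v|\<^sup>2 = |x|\<^sup>2 |v|\<^sup>2\<close> weakened to an inequality.\<close>
lemma sundman_inequality:
  fixes cr :: "'a::real_inner \<Rightarrow> 'a \<Rightarrow> 'b::real_inner" and m :: "nat \<Rightarrow> real"
  assumes lagrange: "\<And>x v. (x \<bullet> v)^2 + (norm (cr x v))^2 \<le> (norm x)^2 * (norm v)^2"
    and m: "\<And>i. i \<in> S \<Longrightarrow> m i \<ge> 0"
  shows "(\<Sum>i\<in>S. m i * (x i \<bullet> v i))^2 + (norm (\<Sum>i\<in>S. m i *\<^sub>R cr (x i) (v i)))^2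
     \<le> (\<Sum>i\<in>S. m i * (norm (x i))^2) * (\<Sum>i\<in>S. m i * (norm (v i))^2)"
proof -
  define A where "A = (\<Sum>i\<in>S. m i * (x i \<bullet> v i))"
  define V where "V = (\<Sum>i\<in>S. m i *\<^sub>R cr (x i) (v i))"
  define R where "R = sqrt (A^2 + (norm V)^2)"
  have planar_CS: "p * q + r * s \<le> sqrt (p^2 + r^2) * sqrt (q^2 + s^2)" for p q r s :: real
  proof -
    have "(p * q + r * s)^2 \<le> (p^2 + r^2) * (q^2 + s^2)"
      using zero_le_power2[of "p * s - r * q"] by (simp add: power2_eq_square algebra_simps)
    then show ?thesis by (metis abs_le_D1 real_sqrt_abs real_sqrt_le_mono real_sqrt_mult)
  qed
  have R0: "R \<ge> 0" by (simp add: R_def)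
  \<comment> \<open>\<open>R\<^sup>2 = A A + V \<bullet> V\<close> is a weighted sum of terms each bounded by Cauchy-Schwarz in \<open>\<real>\<^sup>2\<close>\<close>
  have "R^2 = A * A + V \<bullet> V" by (simp add: R_def power2_eq_square flip: power2_norm_eq_inner)
  also have "\<dots> = (\<Sum>i\<in>S. m i * ((x i \<bullet> v i) * A + cr (x i) (v i) \<bullet> V))"
    by (simp add: A_def V_def sum_distrib_right sum.distrib inner_sum_left algebra_simps)
  also have "\<dots> \<le> (\<Sum>i\<in>S. m i * (norm (x i) * norm (v i) * R))"
  proof (rule sum_mono)
    fix i assume i: "i \<in> S"
    have "(x i \<bullet> v i) * A + cr (x i) (v i) \<bullet> V \<le> (x i \<bullet> v i) * A + norm (cr (x i) (v i)) * norm V"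
      using Cauchy_Schwarz_ineq2[of "cr (x i) (v i)" V] by linarith
    also have "\<dots> \<le> sqrt ((x i \<bullet> v i)^2 + (norm (cr (x i) (v i)))^2) * R"
      unfolding R_def by (rule planar_CS)
    also have "\<dots> \<le> norm (x i) * norm (v i) * R"
      using lagrange[of "x i" "v i"] R0
      by (intro mult_right_mono) (auto intro: real_le_lsqrt simp: power_mult_distrib)
    finally show "m i * ((x i \<bullet> v i) * A + cr (x i) (v i) \<bullet> V) \<le> m i * (norm (x i) * norm (v i) * R)"
      using m[OF i] by (rule mult_left_mono)
  qed
  also have "\<dots> = (\<Sum>i\<in>S. m i * norm (x i) * norm (v i)) * R"
    by (simp add: sum_distrib_right mult.assoc)
  finally have "R \<le> (\<Sum>i\<in>S. m i * norm (x i) * norm (v i))"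
    using R0 by (cases "R = 0") (auto simp: power2_eq_square mult_le_cancel_right sum_nonneg m)
  then have "R^2 \<le> (\<Sum>i\<in>S. m i * norm (x i) * norm (v i))^2"
    using R0 by (intro power_mono) auto
  also have "\<dots> \<le> (\<Sum>i\<in>S. m i * (norm (x i))^2) * (\<Sum>i\<in>S. m i * (norm (v i))^2)"
    by (rule weighted_Cauchy_Schwarz[OF m])
  finally show ?thesis by (simp add: R_def A_def V_def)
qed

lemma sum_offdiag_swap:
  assumes "finite S"
  shows "(\<Sum>i\<in>S. \<Sum>j\<in>S-{i}. f i j) = (\<Sum>i\<in>S. \<Sum>j\<in>S-{i}. f j i)"
proof -
  have offdiag: "(\<Sum>j\<in>S-{i}. g j) = (\<Sum>j\<in>S. if j = i then 0 else g j)" for g :: "'a \<Rightarrow> 'b" and i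
  proof -
    have "(\<Sum>j\<in>S. if j = i then 0 else g j) = (\<Sum>j\<in>S-{i}. if j = i then 0 else g j)"
      using assms by (intro sum.mono_neutral_right) auto
    then show ?thesis by simp
  qed
  have "(\<Sum>i\<in>S. \<Sum>j\<in>S-{i}. f i j) = (\<Sum>i\<in>S. \<Sum>j\<in>S. if j = i then 0 else f i j)"
    by (simp only: offdiag)
  also have "\<dots> = (\<Sum>j\<in>S. \<Sum>i\<in>S. if j = i then 0 else f i j)"
    by (rule sum.swap)
  also have "\<dots> = (\<Sum>i\<in>S. \<Sum>j\<in>S-{i}. f j i)"
    by (simp add: offdiag eq_commute)
  finally show ?thesis .
qed

lemma sum_offdiag_symmetrize:
  fixes f :: "'a \<Rightarrow> 'a \<Rightarrow> 'b::real_vector"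
  assumes "finite S"
  shows "(\<Sum>i\<in>S. \<Sum>j\<in>S-{i}. f i j) = (1/2) *\<^sub>R (\<Sum>i\<in>S. \<Sum>j\<in>S-{i}. f i j + f j i)"
proof -
  have "(\<Sum>i\<in>S. \<Sum>j\<in>S-{i}. f i j + f j i) = (\<Sum>i\<in>S. \<Sum>j\<in>S-{i}. f i j) + (\<Sum>i\<in>S. \<Sum>j\<in>S-{i}. f j i)"
    by (simp only: sum.distrib)
  also have "\<dots> = 2 *\<^sub>R (\<Sum>i\<in>S. \<Sum>j\<in>S-{i}. f i j)"
    using sum_offdiag_swap[OF assms, of f] by (simp add: scaleR_2)
  finally show ?thesis by simp
qed

lemma sum_offdiag_antisym:
  fixes f :: "'a \<Rightarrow> 'a \<Rightarrow> 'b::real_vector"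
  assumes "finite S" and "\<And>i j. f j i = - f i j"
  shows "(\<Sum>i\<in>S. \<Sum>j\<in>S-{i}. f i j) = 0"
proof -
  have "f i j + f j i = 0" for i j using assms(2)[of i j] by simp
  then have "(\<Sum>i\<in>S. \<Sum>j\<in>S-{i}. f i j + f j i) = 0" by simp
  then show ?thesis using sum_offdiag_symmetrize[OF assms(1), of f] by simp
qed

lemma sum_upper_pairs_through:
  fixes f :: "nat \<Rightarrow> 'a::comm_monoid_add"
  assumes i: "i \<in> {1..n}"
  shows "(\<Sum>a\<in>{1..n}. \<Sum>b\<in>{a<..n}. if a = i then f b else if b = i then f a else 0)
       = (\<Sum>j\<in>{1..n}-{i}. f j)"
proof -
  have inner: "(\<Sum>b\<in>{a<..n}. if a = i then f b else if b = i then f a else 0)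
      = (if a = i then (\<Sum>b\<in>{i<..n}. f b) else if a < i then f a else 0)" for a
  proof (cases "a = i")
    case False
    then have "(\<Sum>b\<in>{a<..n}. if a = i then f b else if b = i then f a else 0)
        = (if i \<in> {a<..n} then f a else 0)" by (simp add: sum.delta')
    then show ?thesis using i False by auto
  qed simp
  have "(\<Sum>a\<in>{1..n}. \<Sum>b\<in>{a<..n}. if a = i then f b else if b = i then f a else 0)
      = (\<Sum>b\<in>{i<..n}. f b) + (\<Sum>a\<in>{1..n}-{i}. if a < i then f a else 0)"
    using i by (simp add: inner sum.remove)
  also have "(\<Sum>a\<in>{1..n}-{i}. if a < i then f a else 0) = (\<Sum>a\<in>{a\<in>{1..n}-{i}. a < i}. f a)"
    by (rule sum.inter_filter[symmetric]) simp
  also have "{a\<in>{1..n}-{i}. a < i} = {1..<i}" using i by auto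
  also have "(\<Sum>b\<in>{i<..n}. f b) + (\<Sum>a\<in>{1..<i}. f a) = (\<Sum>j\<in>{i<..n} \<union> {1..<i}. f j)"
    by (rule sum.union_disjoint[symmetric]) auto
  also have "{i<..n} \<union> {1..<i} = {1..n} - {i}" using i by auto
  finally show ?thesis .
qed

section \<open>Newtonian gravitation\<close>

text \<open>\<open>grav (x\<^sub>j - x\<^sub>i)\<close> is the acceleration of body \<open>i\<close> due to a unit mass at \<open>x\<^sub>j\<close>.\<close>
definition grav :: "'a::real_normed_vector \<Rightarrow> 'a" where
  "grav v = (1 / norm v ^ 3) *\<^sub>R v"

lemma grav_minus_commute: "grav (a - b) = - grav (b - a)"
  using norm_minus_commute[of a b] by (simp add: grav_def scaleR_diff_right)

lemma inner_grav_self: "v \<bullet> grav v = 1 / norm v"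
proof (cases "v = 0")
  case False
  then show ?thesis
    by (simp add: grav_def power2_norm_eq_inner[symmetric] power2_eq_square power3_eq_cube)
qed (simp add: grav_def)

lemma tendsto_grav: "(f \<longlongrightarrow> l) F \<Longrightarrow> l \<noteq> 0 \<Longrightarrow> ((\<lambda>x. grav (f x)) \<longlongrightarrow> grav l) F"
  unfolding grav_def by (intro tendsto_intros) auto

lemma inv_cube_perturbation_bound:
  fixes x y d \<delta> :: real
  assumes "\<delta> > 0" "x \<ge> \<delta>" "y \<ge> \<delta>" "\<bar>x - y\<bar> \<le> d"
  shows "d / x^3 + y * \<bar>1 / x^3 - 1 / y^3\<bar> \<le> 4 * d / \<delta>^3"
proof -
  have x: "x > 0" and y: "y > 0" using assms by auto
  have d: "d \<ge> 0" using assms(4) by linarith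
  have e1: "y * \<bar>1 / x^3 - 1 / y^3\<bar> = \<bar>y - x\<bar> * (x^2 + x*y + y^2) / (x^3 * y^2)"
  proof -
    have "1 / x^3 - 1 / y^3 = (y - x) * (x^2 + x*y + y^2) / (x^3 * y^3)"
      using x y by (simp add: field_simps power2_eq_square power3_eq_cube)
    then have "y * \<bar>1 / x^3 - 1 / y^3\<bar> = y * (\<bar>y - x\<bar> * (x^2 + x*y + y^2) / (x^3 * y^3))"
      using x y by (simp add: abs_mult abs_divide)
    also have "\<dots> = \<bar>y - x\<bar> * (x^2 + x*y + y^2) / (x^3 * y^2)"
      using x y by (simp add: field_simps power2_eq_square power3_eq_cube)
    finally show ?thesis .
  qed
  have e2: "\<bar>y - x\<bar> * (x^2 + x*y + y^2) / (x^3 * y^2) = \<bar>y - x\<bar> * (1 / (x * y^2) + 1 / (x^2 * y) + 1 / x^3)"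
    using x y by (simp add: field_simps power2_eq_square power3_eq_cube)
  have i1: "1 / (x * y^2) \<le> 1 / \<delta>^3"
  proof -
    have "\<delta> * \<delta>^2 \<le> x * y^2" by (rule mult_mono) (use assms in \<open>auto intro: power_mono\<close>)
    then have "\<delta>^3 \<le> x * y^2" by (simp add: power3_eq_cube power2_eq_square algebra_simps)
    then show ?thesis using assms by (intro divide_left_mono) auto
  qed
  have i2: "1 / (x^2 * y) \<le> 1 / \<delta>^3"
  proof -
    have "\<delta>^2 * \<delta> \<le> x^2 * y" by (rule mult_mono) (use assms in \<open>auto intro: power_mono\<close>)
    then have "\<delta>^3 \<le> x^2 * y" by (simp add: power3_eq_cube power2_eq_square algebra_simps)
    then show ?thesis using assms by (intro divide_left_mono) auto
  qed
  have i3: "1 / x^3 \<le> 1 / \<delta>^3"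
    using assms by (intro divide_left_mono power_mono) auto
  have "\<bar>y - x\<bar> * (1 / (x * y^2) + 1 / (x^2 * y) + 1 / x^3) \<le> d * (3 / \<delta>^3)"
    using i1 i2 i3 assms(4) d x y by (intro mult_mono) (auto simp: abs_minus_commute)
  moreover have "d / x^3 \<le> d / \<delta>^3" using mult_left_mono[OF i3 d] by simp
  ultimately have Z: "y * \<bar>1 / x^3 - 1 / y^3\<bar> \<le> d * (3 / \<delta>^3)" "d / x^3 \<le> d / \<delta>^3"
    using e1 e2 by simp_all
  have "d / \<delta>^3 + d * (3 / \<delta>^3) = 4 * d / \<delta>^3" by (simp add: field_simps)
  then show ?thesis using Z by linarith
qed

lemma grav_lipschitz:
  fixes a b :: "'a::real_normed_vector"
  assumes "\<delta> > 0" "norm a \<ge> \<delta>" "norm b \<ge> \<delta>"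
  shows "norm (grav a - grav b) \<le> 4 / \<delta>^3 * norm (a - b)"
proof -
  have "grav a - grav b = (1 / norm a ^ 3) *\<^sub>R (a - b) + (1 / norm a ^ 3 - 1 / norm b ^ 3) *\<^sub>R b"
    unfolding grav_def by (simp add: algebra_simps)
  then have "norm (grav a - grav b) \<le> norm ((1 / norm a ^ 3) *\<^sub>R (a - b)) + norm ((1 / norm a ^ 3 - 1 / norm b ^ 3) *\<^sub>R b)"
    using norm_triangle_ineq[of "(1 / norm a ^ 3) *\<^sub>R (a - b)" "(1 / norm a ^ 3 - 1 / norm b ^ 3) *\<^sub>R b"] by simp
  then have "norm (grav a - grav b) \<le> norm (a - b) / norm a ^ 3 + norm b * \<bar>1 / norm a ^ 3 - 1 / norm b ^ 3\<bar>"
    by (simp add: mult.commute)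
  also have "\<dots> \<le> 4 * norm (a - b) / \<delta>^3"
    by (rule inv_cube_perturbation_bound) (use assms norm_triangle_ineq3 in auto)
  finally show ?thesis by simp
qed

lemma has_real_derivative_inner:
  assumes "(x has_vector_derivative x') (at t)" "(y has_vector_derivative y') (at t)"
  shows "((\<lambda>s. x s \<bullet> y s) has_real_derivative (x t \<bullet> y' + x' \<bullet> y t)) (at t)"
  unfolding has_real_derivative_iff_has_vector_derivative
  by (rule bounded_bilinear.has_vector_derivative[OF bounded_bilinear_inner assms])

lemma has_real_derivative_weighted_sum_inner:
  assumes "\<And>i. i \<in> S \<Longrightarrow> ((\<lambda>s. x s i) has_vector_derivative x' i) (at t)"
    and "\<And>i. i \<in> S \<Longrightarrow> ((\<lambda>s. y s i) has_vector_derivative y' i) (at t)"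
  shows "((\<lambda>s. \<Sum>i\<in>S. m i * (x s i \<bullet> y s i)) has_real_derivative
          (\<Sum>i\<in>S. m i * (x t i \<bullet> y' i + x' i \<bullet> y t i))) (at t)"
  by (intro DERIV_sum DERIV_cmult has_real_derivative_inner assms)

lemma has_real_derivative_inverse_norm:
  fixes v :: "real \<Rightarrow> 'a::real_inner"
  assumes v: "(v has_vector_derivative v') (at t)" and nz: "v t \<noteq> 0"
  shows "((\<lambda>s. 1 / norm (v s)) has_real_derivative (- (v t \<bullet> v') / norm (v t) ^ 3)) (at t)"
proof -
  have D: "((\<lambda>s. norm (v s)) has_derivative (\<lambda>h. (h *\<^sub>R v') \<bullet> sgn (v t))) (at t)"
    using has_derivative_compose[OF v[unfolded has_vector_derivative_def] has_derivative_norm[OF nz]] by simp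
  have E: "(\<lambda>h. (h *\<^sub>R v') \<bullet> sgn (v t)) = (*) ((v t \<bullet> v') / norm (v t))"
    by (auto simp: sgn_div_norm inner_commute field_simps)
  have n: "((\<lambda>s. norm (v s)) has_real_derivative (v t \<bullet> v') / norm (v t)) (at t)"
    using D unfolding E has_field_derivative_def .
  have nn: "norm (v t) \<noteq> 0" using nz by simp
  have X: "((\<lambda>s. inverse (norm (v s))) has_real_derivative - ((v t \<bullet> v') / norm (v t) * inverse (norm (v t) ^ 2))) (at t)"
    using DERIV_inverse_fun[OF n nn] by (simp add: power2_eq_square)
  have EQ: "- ((v t \<bullet> v') / norm (v t) * inverse (norm (v t) ^ 2)) = - (v t \<bullet> v') / norm (v t) ^ 3"
    using nn by (simp add: divide_inverse power2_eq_square power3_eq_cube mult.assoc)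
  have F: "(\<lambda>s. 1 / norm (v s)) = (\<lambda>s. inverse (norm (v s)))" by (simp add: inverse_eq_divide)
  show ?thesis unfolding F EQ[symmetric] by (rule X)
qed

lemma has_derivative_inverse_norm_diff:
  fixes y0 z :: "'a::real_inner"
  assumes "y0 \<noteq> z"
  shows "((\<lambda>y. c / norm (y - z)) has_derivative (\<lambda>h. (c *\<^sub>R grav (z - y0)) \<bullet> h)) (at y0)"
proof -
  have nz: "y0 - z \<noteq> 0" using assms by simp
  have "((\<lambda>y. norm (y - z)) has_derivative (\<lambda>h. h \<bullet> sgn (y0 - z))) (at y0)"
    using has_derivative_compose[OF has_derivative_diff[OF has_derivative_ident has_derivative_const]
        has_derivative_norm[OF nz]] by simp
  then have "((\<lambda>y. c / norm (y - z)) has_derivative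
     (\<lambda>h. - c * (inverse (norm (y0 - z)) * (h \<bullet> sgn (y0 - z)) * inverse (norm (y0 - z))) + 0 / norm (y0 - z))) (at y0)"
    using nz by (intro has_derivative_divide[OF has_derivative_const]) auto
  then show ?thesis
  proof (rule has_derivative_eq_rhs)
    show "(\<lambda>h. - c * (inverse (norm (y0 - z)) * (h \<bullet> sgn (y0 - z)) * inverse (norm (y0 - z))) + 0 / norm (y0 - z))
       = (\<lambda>h. (c *\<^sub>R grav (z - y0)) \<bullet> h)"
    proof (rule ext)
      fix h
      show "- c * (inverse (norm (y0 - z)) * (h \<bullet> sgn (y0 - z)) * inverse (norm (y0 - z))) + 0 / norm (y0 - z)
          = (c *\<^sub>R grav (z - y0)) \<bullet> h"
        using nz by (simp add: grav_def sgn_div_norm norm_minus_commute[of z y0] inner_diff_left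
            inner_diff_right inner_commute[of h] field_simps power3_eq_cube)
    qed
  qed
qed

lemma has_derivative_nbU_update:
  fixes x :: "nat \<Rightarrow> 'a::real_inner"
  assumes i: "i \<in> {1..n}" and distinct: "\<And>j. j \<in> {1..n} \<Longrightarrow> j \<noteq> i \<Longrightarrow> x j \<noteq> x i"
  shows "((\<lambda>y. nbU n m (x(i := y))) has_derivative
          (\<lambda>h. (\<Sum>j\<in>{1..n}-{i}. (m i * m j) *\<^sub>R grav (x j - x i)) \<bullet> h)) (at (x i))"
proof -
  define f where "f j h = ((m i * m j) *\<^sub>R grav (x j - x i)) \<bullet> h" for j h
  define D where "D a b h = (if a = i then f b h else if b = i then f a h else 0)" for a b h
  have pair: "((\<lambda>y. m a * m b / dist ((x(i := y)) a) ((x(i := y)) b)) has_derivative D a b) (at (x i))"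
    if a: "a \<in> {1..n}" and b: "b \<in> {a<..n}" for a b
  proof -
    consider "a = i" | "b = i" | "a \<noteq> i" "b \<noteq> i" by blast
    then show ?thesis
    proof cases
      case 1
      have "((\<lambda>y. m a * m b / norm (y - x b)) has_derivative (\<lambda>h. ((m a * m b) *\<^sub>R grav (x b - x a)) \<bullet> h)) (at (x a))"
        using distinct[of b] 1 a b by (intro has_derivative_inverse_norm_diff) auto
      then show ?thesis using 1 a b by (simp add: D_def[abs_def] f_def dist_norm)
    next
      case 2
      have "((\<lambda>y. m b * m a / norm (y - x a)) has_derivative (\<lambda>h. ((m b * m a) *\<^sub>R grav (x a - x b)) \<bullet> h)) (at (x b))"
        using distinct[of a] 2 a b by (intro has_derivative_inverse_norm_diff) auto
      then show ?thesis using 2 a b by (simp add: D_def[abs_def] f_def dist_norm norm_minus_commute mult.commute)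
    qed (simp add: D_def[abs_def])
  qed
  have "((\<lambda>y. nbU n m (x(i := y))) has_derivative (\<lambda>h. \<Sum>a\<in>{1..n}. \<Sum>b\<in>{a<..n}. D a b h)) (at (x i))"
    unfolding nbU_def by (intro has_derivative_sum pair)
  moreover have "(\<Sum>a\<in>{1..n}. \<Sum>b\<in>{a<..n}. D a b h) = (\<Sum>j\<in>{1..n}-{i}. f j h)" for h
    unfolding D_def by (rule sum_upper_pairs_through[OF i])
  ultimately show ?thesis
    by (simp add: f_def inner_sum_left)
qed

lemma sum_cmass_deviation:
  fixes x :: "nat \<Rightarrow> 'a::real_vector"
  assumes "(\<Sum>i\<in>G. m i) \<noteq> 0"
  shows "(\<Sum>i\<in>G. m i *\<^sub>R (x i - cmass m G x)) = 0"
proof -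
  have "(\<Sum>i\<in>G. m i *\<^sub>R (x i - cmass m G x)) = (\<Sum>i\<in>G. m i *\<^sub>R x i) - (\<Sum>i\<in>G. m i) *\<^sub>R cmass m G x"
    by (simp add: algebra_simps sum_subtractf scaleR_sum_left)
  also have "(\<Sum>i\<in>G. m i) *\<^sub>R cmass m G x = (\<Sum>i\<in>G. m i *\<^sub>R x i)"
    using assms by (simp add: cmass_def)
  finally show ?thesis by simp
qed

lemma cmass_inertia_le:
  fixes x :: "nat \<Rightarrow> 'a::real_inner"
  assumes "(\<Sum>i\<in>G. m i) > 0" "\<And>i. i \<in> G \<Longrightarrow> m i \<ge> 0"
  shows "(\<Sum>i\<in>G. m i * (norm (x i - cmass m G x))^2) \<le> (\<Sum>i\<in>G. m i * (norm (x i - y))^2)"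
proof -
  define c where "c = cmass m G x"
  have z: "(\<Sum>i\<in>G. m i *\<^sub>R (x i - c)) = 0" using sum_cmass_deviation[of m G x] assms(1) unfolding c_def by simp
  have pt: "norm (x i - y)^2 = norm (x i - c)^2 + 2 * ((x i - c) \<bullet> (c - y)) + norm (c - y)^2" for i
    by (simp add: power2_norm_eq_inner inner_diff_left inner_diff_right inner_commute algebra_simps)
  have "(\<Sum>i\<in>G. m i * (norm (x i - y))^2) = (\<Sum>i\<in>G. m i * norm (x i - c)^2) + 2 * (\<Sum>i\<in>G. m i * ((x i - c) \<bullet> (c - y)))
       + (\<Sum>i\<in>G. m i) * norm (c - y)^2"
  proof -
    have "m i * (norm (x i - y))^2 = m i * norm (x i - c)^2 + 2 * (m i * ((x i - c) \<bullet> (c - y))) + m i * norm (c - y)^2" for i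
      unfolding pt by (simp add: distrib_left)
    then show ?thesis by (simp add: sum.distrib sum_distrib_left sum_distrib_right)
  qed
  also have "(\<Sum>i\<in>G. m i * ((x i - c) \<bullet> (c - y))) = (\<Sum>i\<in>G. m i *\<^sub>R (x i - c)) \<bullet> (c - y)"
    by (simp add: inner_sum_left)
  also have "\<dots> = 0" using z by simp
  finally show ?thesis using assms(1) by (simp add: c_def)
qed

lemma has_vector_derivative_cmass:
  assumes "\<And>i. i \<in> G \<Longrightarrow> ((\<lambda>s. x s i) has_vector_derivative x' i) (at t)"
  shows "((\<lambda>s. cmass m G (x s)) has_vector_derivative cmass m G x') (at t)"
proof -
  have "((\<lambda>s. \<Sum>i\<in>G. m i *\<^sub>R x s i) has_vector_derivative (\<Sum>i\<in>G. m i *\<^sub>R x' i)) (at t)"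
    by (intro has_vector_derivative_sum bounded_linear.has_vector_derivative[OF bounded_linear_scaleR_right] assms)
  then show ?thesis unfolding cmass_def
    by (rule bounded_linear.has_vector_derivative[OF bounded_linear_scaleR_right])
qed

lemma tendsto_cmass:
  fixes x :: "'b \<Rightarrow> nat \<Rightarrow> 'a::real_normed_vector"
  assumes "\<And>i. i \<in> G \<Longrightarrow> ((\<lambda>t. x t i) \<longlongrightarrow> L) F" and "(\<Sum>i\<in>G. m i) \<noteq> 0"
  shows "((\<lambda>t. cmass m G (x t)) \<longlongrightarrow> L) F"
proof -
  have "((\<lambda>t. (1 / (\<Sum>i\<in>G. m i)) *\<^sub>R (\<Sum>i\<in>G. m i *\<^sub>R x t i)) \<longlongrightarrow> (1 / (\<Sum>i\<in>G. m i)) *\<^sub>R (\<Sum>i\<in>G. m i *\<^sub>R L)) F"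
    by (intro tendsto_scaleR tendsto_const tendsto_sum) (use assms(1) in auto)
  also have "(1 / (\<Sum>i\<in>G. m i)) *\<^sub>R (\<Sum>i\<in>G. m i *\<^sub>R L) = L"
    using assms(2) by (simp flip: scaleR_sum_left)
  finally show ?thesis by (simp add: cmass_def)
qed

definition newton_force :: "(nat \<Rightarrow> real) \<Rightarrow> nat set \<Rightarrow> (nat \<Rightarrow> 'a::real_normed_vector) \<Rightarrow> nat \<Rightarrow> 'a" where
  "newton_force m S x i = (\<Sum>j\<in>S-{i}. m j *\<^sub>R grav (x j - x i))"

definition potential :: "(nat \<Rightarrow> real) \<Rightarrow> nat set \<Rightarrow> (nat \<Rightarrow> 'a::real_normed_vector) \<Rightarrow> real" where
  "potential m S x = (1/2) * (\<Sum>i\<in>S. \<Sum>j\<in>S-{i}. m i * m j / norm (x i - x j))"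

lemma newton_force_union:
  assumes "finite S" "finite S'" "S \<inter> S' = {}"
  shows "newton_force m (S \<union> S') x i = newton_force m S x i + newton_force m S' x i"
proof -
  have "(S \<union> S') - {i} = (S - {i}) \<union> (S' - {i})" "(S - {i}) \<inter> (S' - {i}) = {}" using assms(3) by auto
  then show ?thesis using assms(1,2) by (simp add: newton_force_def sum.union_disjoint)
qed

lemma sum_newton_force_eq_0:
  assumes "finite S"
  shows "(\<Sum>i\<in>S. m i *\<^sub>R newton_force m S x i) = 0"
proof -
  have "(\<Sum>i\<in>S. m i *\<^sub>R newton_force m S x i) = (\<Sum>i\<in>S. \<Sum>j\<in>S-{i}. (m i * m j) *\<^sub>R grav (x j - x i))"
    by (simp add: newton_force_def scaleR_sum_right)
  also have "\<dots> = 0"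
  proof (rule sum_offdiag_antisym[OF assms])
    fix i j
    show "(m j * m i) *\<^sub>R grav (x i - x j) = - ((m i * m j) *\<^sub>R grav (x j - x i))"
      unfolding grav_minus_commute[of "x i" "x j"] by (simp add: mult.commute)
  qed
  finally show ?thesis .
qed

lemma virial_identity:
  assumes "finite S"
  shows "(\<Sum>i\<in>S. m i * ((x i - y i) \<bullet> newton_force m S x i))
       = - potential m S x + (1/2) * (\<Sum>i\<in>S. \<Sum>j\<in>S-{i}. m i * m j * ((y j - y i) \<bullet> grav (x j - x i)))"
proof -
  define F where "F i j = m i * m j * ((x i - y i) \<bullet> grav (x j - x i))" for i j
  have "(\<Sum>i\<in>S. m i * ((x i - y i) \<bullet> newton_force m S x i)) = (\<Sum>i\<in>S. \<Sum>j\<in>S-{i}. F i j)"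
    by (simp add: newton_force_def F_def inner_sum_right sum_distrib_left mult.assoc)
  also have "\<dots> = (1/2) *\<^sub>R (\<Sum>i\<in>S. \<Sum>j\<in>S-{i}. F i j + F j i)"
    by (rule sum_offdiag_symmetrize[OF assms])
  \<comment> \<open>each pair contributes \<open>(x\<^sub>i - x\<^sub>j) \<bullet> grav (x\<^sub>j - x\<^sub>i) = - 1 / |x\<^sub>i - x\<^sub>j|\<close> plus a term in \<open>y\<close>\<close>
  also have "(\<Sum>i\<in>S. \<Sum>j\<in>S-{i}. F i j + F j i) =
      (\<Sum>i\<in>S. \<Sum>j\<in>S-{i}. - (m i * m j / norm (x i - x j)) + m i * m j * ((y j - y i) \<bullet> grav (x j - x i)))"
  proof (intro sum.cong refl)
    fix i j
    have "F i j + F j i = m i * m j * ((- (x j - x i) + (y j - y i)) \<bullet> grav (x j - x i))"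
      unfolding F_def grav_minus_commute[of "x i" "x j"] by (simp add: algebra_simps inner_diff_left)
    also have "(- (x j - x i) + (y j - y i)) \<bullet> grav (x j - x i)
        = - (1 / norm (x j - x i)) + (y j - y i) \<bullet> grav (x j - x i)"
      by (simp only: inner_add_left inner_minus_left inner_grav_self)
    finally show "F i j + F j i = - (m i * m j / norm (x i - x j)) + m i * m j * ((y j - y i) \<bullet> grav (x j - x i))"
      by (simp add: algebra_simps norm_minus_commute)
  qed
  also have "\<dots> = - (\<Sum>i\<in>S. \<Sum>j\<in>S-{i}. m i * m j / norm (x i - x j))
        + (\<Sum>i\<in>S. \<Sum>j\<in>S-{i}. m i * m j * ((y j - y i) \<bullet> grav (x j - x i)))"
    by (simp add: sum.distrib sum_negf sum_subtractf)
  finally show ?thesis by (simp add: potential_def algebra_simps)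
qed

lemma sum_cross_newton_force_eq_0:
  fixes cr :: "'a::real_normed_vector \<Rightarrow> 'a \<Rightarrow> 'b::real_normed_vector"
  assumes "finite S" and cr: "bounded_bilinear cr" and alt: "\<And>v. cr v v = 0"
  shows "(\<Sum>i\<in>S. m i *\<^sub>R cr (x i - c) (newton_force m S x i)) = 0"
proof -
  interpret cr: bounded_bilinear cr by (fact cr)
  define F where "F i j = (m i * m j) *\<^sub>R cr (x i - c) (grav (x j - x i))" for i j
  \<comment> \<open>the pair forces are central: each pair contributes a multiple of \<open>cr v v\<close>\<close>
  have pair_zero: "F i j + F j i = 0" for i j
  proof -
    have "F i j + F j i = (m i * m j) *\<^sub>R cr ((x i - c) - (x j - c)) (grav (x j - x i))"
      unfolding F_def grav_minus_commute[of "x i" "x j"]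
      by (simp add: cr.minus_right cr.diff_left algebra_simps)
    also have "(x i - c) - (x j - c) = - (x j - x i)" by simp
    also have "(m i * m j) *\<^sub>R cr (- (x j - x i)) (grav (x j - x i))
        = (m i * m j) *\<^sub>R (- ((1 / norm (x j - x i) ^ 3) *\<^sub>R cr (x j - x i) (x j - x i)))"
      by (simp only: grav_def cr.minus_left cr.scaleR_right scaleR_minus_right)
    finally show ?thesis by (simp add: alt)
  qed
  have "(\<Sum>i\<in>S. m i *\<^sub>R cr (x i - c) (newton_force m S x i)) = (\<Sum>i\<in>S. \<Sum>j\<in>S-{i}. F i j)"
    by (simp add: newton_force_def F_def cr.sum_right cr.scaleR_right scaleR_sum_right)
  also have "\<dots> = (1/2) *\<^sub>R (\<Sum>i\<in>S. \<Sum>j\<in>S-{i}. F i j + F j i)"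
    by (rule sum_offdiag_symmetrize[OF assms(1)])
  also have "\<dots> = 0" using pair_zero by simp
  finally show ?thesis by simp
qed

lemma potential_ge_pair:
  assumes "finite S" "\<And>i. i \<in> S \<Longrightarrow> m i \<ge> 0" "a \<in> S" "b \<in> S" "a \<noteq> b"
  shows "potential m S x \<ge> (1/2) * (m a * m b / norm (x a - x b))"
proof -
  have nonneg: "m i * m j / norm (x i - x j) \<ge> 0" if "i \<in> S" "j \<in> S" for i j
    using assms(2) that by simp
  have "m a * m b / norm (x a - x b) \<le> (\<Sum>j\<in>S-{a}. m a * m j / norm (x a - x j))"
    using assms nonneg by (intro member_le_sum) auto
  also have "\<dots> \<le> (\<Sum>i\<in>S. \<Sum>j\<in>S-{i}. m i * m j / norm (x i - x j))"
    using assms nonneg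
    by (intro member_le_sum[where f="\<lambda>i. \<Sum>j\<in>S-{i}. m i * m j / norm (x i - x j)"] sum_nonneg) auto
  finally show ?thesis by (simp add: potential_def)
qed

lemma has_real_derivative_potential:
  fixes x :: "real \<Rightarrow> nat \<Rightarrow> 'a::real_inner"
  assumes "finite S"
    and x': "\<And>i. i \<in> S \<Longrightarrow> ((\<lambda>s. x s i) has_vector_derivative x' i) (at t)"
    and distinct: "\<And>i j. i \<in> S \<Longrightarrow> j \<in> S \<Longrightarrow> i \<noteq> j \<Longrightarrow> x t i \<noteq> x t j"
  shows "((\<lambda>s. potential m S (x s)) has_real_derivative (\<Sum>i\<in>S. m i * (x' i \<bullet> newton_force m S (x t) i))) (at t)"
proof -
  define F where "F i j = m i * m j * (x' i \<bullet> grav (x t j - x t i))" for i j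
  have pair: "((\<lambda>s. m i * m j / norm (x s i - x s j)) has_real_derivative (F i j + F j i)) (at t)"
    if i: "i \<in> S" and j: "j \<in> S - {i}" for i j
  proof -
    have "((\<lambda>s. x s i - x s j) has_vector_derivative (x' i - x' j)) (at t)"
      using i j by (intro has_vector_derivative_diff x') auto
    from has_real_derivative_inverse_norm[OF this] distinct[of i j] i j
    have "((\<lambda>s. m i * m j * (1 / norm (x s i - x s j))) has_real_derivative
        m i * m j * (- ((x t i - x t j) \<bullet> (x' i - x' j)) / norm (x t i - x t j) ^ 3)) (at t)"
      by (intro DERIV_cmult) auto
    moreover have "m i * m j * (- ((x t i - x t j) \<bullet> (x' i - x' j)) / norm (x t i - x t j) ^ 3) = F i j + F j i"
      unfolding F_def grav_def using norm_minus_commute[of "x t j" "x t i"]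
      by (simp add: inner_diff_left inner_diff_right inner_commute algebra_simps divide_inverse)
    ultimately show ?thesis by simp
  qed
  have "((\<lambda>s. potential m S (x s)) has_real_derivative (1/2) * (\<Sum>i\<in>S. \<Sum>j\<in>S-{i}. F i j + F j i)) (at t)"
    unfolding potential_def by (intro DERIV_cmult DERIV_sum pair) auto
  moreover have "(1/2) * (\<Sum>i\<in>S. \<Sum>j\<in>S-{i}. F i j + F j i) = (\<Sum>i\<in>S. m i * (x' i \<bullet> newton_force m S (x t) i))"
    using sum_offdiag_symmetrize[OF assms(1), of F]
    by (simp add: newton_force_def F_def inner_sum_right sum_distrib_left mult.assoc)
  ultimately show ?thesis by simp
qed

section \<open>Sundman's estimate for the whole system\<close>

locale nbody_collision =
  fixes n :: nat and m :: "nat \<Rightarrow> real" and t0 T :: real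
    and q qd qdd :: "real \<Rightarrow> nat \<Rightarrow> 'a::euclidean_space"
    and G :: "nat set" and L :: "nat \<Rightarrow> 'a" and LG :: 'a
  assumes masses_pos: "\<And>i. i \<in> {1..n} \<Longrightarrow> m i > 0"
    and t0_less_T: "t0 < T"
    and collision_free: "\<And>t i j. t \<in> {t0..<T} \<Longrightarrow> i \<in> {1..n} \<Longrightarrow> j \<in> {1..n} \<Longrightarrow> i \<noteq> j \<Longrightarrow> q t i \<noteq> q t j"
    and q_deriv_within: "\<And>t i. t \<in> {t0..<T} \<Longrightarrow> i \<in> {1..n} \<Longrightarrow>
        ((\<lambda>s. q s i) has_vector_derivative qd t i) (at t within {t0..<T})"
    and qd_deriv_within: "\<And>t i. t \<in> {t0..<T} \<Longrightarrow> i \<in> {1..n} \<Longrightarrow>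
        ((\<lambda>s. qd s i) has_vector_derivative qdd t i) (at t within {t0..<T})"
    and potential_gradient: "\<And>t i. t \<in> {t0..<T} \<Longrightarrow> i \<in> {1..n} \<Longrightarrow>
        ((\<lambda>x. nbU n m ((q t)(i := x))) has_derivative (\<lambda>h. (m i *\<^sub>R qdd t i) \<bullet> h)) (at (q t i))"
    and q_tendsto: "\<And>i. i \<in> {1..n} \<Longrightarrow> ((\<lambda>t. q t i) \<longlongrightarrow> L i) (at_left T)"
    and cluster_subset: "G \<subseteq> {1..n}" and cluster_card: "card G \<ge> 2"
    and cluster_limit: "\<And>i. i \<in> G \<Longrightarrow> L i = LG"
    and outside_limit: "\<And>j. j \<in> {1..n} \<Longrightarrow> j \<notin> G \<Longrightarrow> L j \<noteq> LG"
begin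

abbreviation "N \<equiv> {1..n}"

lemma finite_cluster: "finite G"
  using cluster_subset finite_subset by blast

lemma cluster_masses_pos: "i \<in> G \<Longrightarrow> m i > 0"
  using cluster_subset masses_pos by auto

lemma masses_nonneg: "i \<in> N \<Longrightarrow> m i \<ge> 0"
  using masses_pos less_imp_le by blast

lemma cluster_pair:
  obtains a b where "a \<in> G" "b \<in> G" "a \<noteq> b"
  using cluster_card card_le_Suc0_iff_eq[OF finite_cluster] by fastforce

lemma q_deriv: "t \<in> {t0<..<T} \<Longrightarrow> i \<in> N \<Longrightarrow> ((\<lambda>s. q s i) has_vector_derivative qd t i) (at t)"
  using q_deriv_within[of t i] at_within_interior[of t "{t0..<T}"] by auto

lemma qd_deriv: "t \<in> {t0<..<T} \<Longrightarrow> i \<in> N \<Longrightarrow> ((\<lambda>s. qd s i) has_vector_derivative qdd t i) (at t)"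
  using qd_deriv_within[of t i] at_within_interior[of t "{t0..<T}"] by auto

lemma q_diff_const_deriv: "t \<in> {t0<..<T} \<Longrightarrow> i \<in> N \<Longrightarrow> ((\<lambda>s. q s i - c) has_vector_derivative qd t i) (at t)"
  using q_deriv[of t i] by (simp add: has_vector_derivative_diff_const)

lemma newton_law:
  assumes t: "t \<in> {t0..<T}" and i: "i \<in> N"
  shows "qdd t i = newton_force m N (q t) i"
proof -
  define V where "V = (\<Sum>j\<in>N-{i}. (m i * m j) *\<^sub>R grav (q t j - q t i))"
  have "((\<lambda>x. nbU n m ((q t)(i := x))) has_derivative (\<lambda>h. V \<bullet> h)) (at (q t i))"
    unfolding V_def using collision_free[OF t] i by (intro has_derivative_nbU_update) auto
  from has_derivative_unique[OF this potential_gradient[OF t i]]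
  have "\<forall>h. V \<bullet> h = (m i *\<^sub>R qdd t i) \<bullet> h" by (simp add: fun_eq_iff)
  then have "V = m i *\<^sub>R qdd t i" by (simp only: vector_eq_rdot)
  then have "qdd t i = (1 / m i) *\<^sub>R V" using masses_pos[OF i] by simp
  then show ?thesis
    using masses_pos[OF i] by (simp add: V_def newton_force_def scaleR_sum_right)
qed

definition twice_kinetic :: "real \<Rightarrow> real" where
  "twice_kinetic t = (\<Sum>i\<in>N. m i * (qd t i \<bullet> qd t i))"

definition energy :: "real \<Rightarrow> real" where
  "energy t = twice_kinetic t / 2 - potential m N (q t)"

lemma potential_deriv:
  assumes S: "S \<subseteq> N" and t: "t \<in> {t0<..<T}"
  shows "((\<lambda>s. potential m S (q s)) has_real_derivative (\<Sum>i\<in>S. m i * (qd t i \<bullet> newton_force m S (q t) i))) (at t)"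
  using S t collision_free[of t] finite_subset[OF S]
  by (intro has_real_derivative_potential q_deriv) (auto simp: subset_iff)

lemma energy_deriv: "t \<in> {t0<..<T} \<Longrightarrow> (energy has_real_derivative 0) (at t)"
proof -
  assume t: "t \<in> {t0<..<T}"
  have "(twice_kinetic has_real_derivative (\<Sum>i\<in>N. m i * (qd t i \<bullet> qdd t i + qdd t i \<bullet> qd t i))) (at t)"
    unfolding twice_kinetic_def[abs_def] using t by (intro has_real_derivative_weighted_sum_inner qd_deriv)
  then have "(energy has_real_derivative
      (\<Sum>i\<in>N. m i * (qd t i \<bullet> qdd t i + qdd t i \<bullet> qd t i)) / 2 - (\<Sum>i\<in>N. m i * (qd t i \<bullet> newton_force m N (q t) i))) (at t)"
    unfolding energy_def[abs_def] using t by (intro DERIV_diff DERIV_cdivide potential_deriv) auto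
  moreover have "(\<Sum>i\<in>N. m i * (qd t i \<bullet> qdd t i + qdd t i \<bullet> qd t i)) = 2 * (\<Sum>i\<in>N. m i * (qd t i \<bullet> newton_force m N (q t) i))"
    using t by (simp add: sum_distrib_left newton_law inner_commute algebra_simps)
  ultimately show ?thesis by simp
qed

definition energy_level :: real where
  "energy_level = energy ((t0 + T) / 2)"

lemma energy_eq: "t \<in> {t0<..<T} \<Longrightarrow> energy t = energy_level"
  unfolding energy_level_def using t0_less_T energy_deriv
  by (intro DERIV_isconst3[of t0 T]) auto

text \<open>The moment of inertia is taken about the limit configuration \<open>L\<close> rather than the centre of
  mass; this makes it tend to \<open>0\<close> at the collision time.\<close>
definition inertia :: "real \<Rightarrow> real" where
  "inertia t = (\<Sum>i\<in>N. m i * ((q t i - L i) \<bullet> (q t i - L i)))"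

definition inertia' :: "real \<Rightarrow> real" where
  "inertia' t = 2 * (\<Sum>i\<in>N. m i * ((q t i - L i) \<bullet> qd t i))"

definition inertia'' :: "real \<Rightarrow> real" where
  "inertia'' t = 2 * (\<Sum>i\<in>N. m i * ((q t i - L i) \<bullet> qdd t i + qd t i \<bullet> qd t i))"

text \<open>The price of measuring from \<open>L\<close> in the Lagrange-Jacobi identity; only pairs with distinct
  limits contribute, so it stays bounded.\<close>
definition lj_remainder :: "real \<Rightarrow> real" where
  "lj_remainder t = (1/2) * (\<Sum>i\<in>N. \<Sum>j\<in>N-{i}. m i * m j * ((L j - L i) \<bullet> grav (q t j - q t i)))"

lemma inertia_deriv: "t \<in> {t0<..<T} \<Longrightarrow> (inertia has_real_derivative inertia' t) (at t)"
proof -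
  assume t: "t \<in> {t0<..<T}"
  have "(inertia has_real_derivative (\<Sum>i\<in>N. m i * ((q t i - L i) \<bullet> qd t i + qd t i \<bullet> (q t i - L i)))) (at t)"
    unfolding inertia_def[abs_def] using t
    by (intro has_real_derivative_weighted_sum_inner q_diff_const_deriv)
  then show ?thesis by (simp add: inertia'_def sum_distrib_left inner_commute algebra_simps)
qed

lemma inertia'_deriv: "t \<in> {t0<..<T} \<Longrightarrow> (inertia' has_real_derivative inertia'' t) (at t)"
  unfolding inertia'_def[abs_def] inertia''_def
  by (intro DERIV_cmult has_real_derivative_weighted_sum_inner q_diff_const_deriv qd_deriv)

lemma lagrange_jacobi:
  assumes t: "t \<in> {t0<..<T}"
  shows "inertia'' t = 2 * twice_kinetic t - 2 * potential m N (q t) + 2 * lj_remainder t"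
proof -
  have "(\<Sum>i\<in>N. m i * ((q t i - L i) \<bullet> qdd t i)) = - potential m N (q t) + lj_remainder t"
    using t newton_law[of t] virial_identity[of N m "q t" L] by (simp add: lj_remainder_def)
  then show ?thesis by (simp add: inertia''_def twice_kinetic_def sum.distrib distrib_left)
qed

lemma inertia''_eq_kinetic: "t \<in> {t0<..<T} \<Longrightarrow> inertia'' t = twice_kinetic t + 2 * energy_level + 2 * lj_remainder t"
  using lagrange_jacobi energy_eq[of t] by (simp add: energy_def)

lemma inertia''_eq_potential: "t \<in> {t0<..<T} \<Longrightarrow> inertia'' t = 4 * energy_level + 2 * potential m N (q t) + 2 * lj_remainder t"
  using lagrange_jacobi energy_eq[of t] by (simp add: energy_def)

lemma inertia'_sq_le: "inertia' t ^ 2 \<le> 4 * inertia t * twice_kinetic t"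
  using weighted_inner_Cauchy_Schwarz[of N m "\<lambda>i. q t i - L i" "qd t", OF masses_nonneg]
  by (simp add: inertia'_def inertia_def twice_kinetic_def power_mult_distrib power2_norm_eq_inner)

lemma inertia_nonneg: "inertia t \<ge> 0"
  unfolding inertia_def using masses_nonneg by (intro sum_nonneg mult_nonneg_nonneg) auto

lemma inertia_pos: "t \<in> {t0<..<T} \<Longrightarrow> inertia t > 0"
proof -
  assume t: "t \<in> {t0<..<T}"
  obtain a b where ab: "a \<in> G" "b \<in> G" "a \<noteq> b" by (rule cluster_pair)
  then have "q t a \<noteq> q t b" using t cluster_subset by (intro collision_free) auto
  moreover have "L a = L b" using ab cluster_limit by simp
  ultimately have "q t a \<noteq> L a \<or> q t b \<noteq> L b" by auto
  then obtain i where i: "i \<in> N" "q t i \<noteq> L i" using ab cluster_subset by auto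
  have "0 < m i * ((q t i - L i) \<bullet> (q t i - L i))" using i masses_pos by simp
  also have "\<dots> \<le> inertia t"
    unfolding inertia_def using i masses_nonneg by (intro member_le_sum) auto
  finally show ?thesis .
qed

lemma inertia_tendsto_0: "(inertia \<longlongrightarrow> 0) (at_left T)"
proof -
  have "(inertia \<longlongrightarrow> (\<Sum>i\<in>N. m i * ((L i - L i) \<bullet> (L i - L i)))) (at_left T)"
    unfolding inertia_def[abs_def] by (intro tendsto_intros q_tendsto) auto
  then show ?thesis by simp
qed

lemma lj_remainder_bounded: "\<exists>B. eventually (\<lambda>t. \<bar>lj_remainder t\<bar> \<le> B) (at_left T)"
proof -
  have pair: "((\<lambda>t. (L j - L i) \<bullet> grav (q t j - q t i)) \<longlongrightarrow> (L j - L i) \<bullet> grav (L j - L i)) (at_left T)"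
    if "i \<in> N" "j \<in> N" for i j
  proof (cases "L j = L i")
    case False
    have "((\<lambda>t. q t j - q t i) \<longlongrightarrow> L j - L i) (at_left T)"
      using that by (intro tendsto_diff q_tendsto)
    then show ?thesis using False by (intro tendsto_inner tendsto_const tendsto_grav) auto
  qed simp
  define R where "R = (1/2) * (\<Sum>i\<in>N. \<Sum>j\<in>N-{i}. m i * m j * ((L j - L i) \<bullet> grav (L j - L i)))"
  have "(lj_remainder \<longlongrightarrow> R) (at_left T)"
    unfolding lj_remainder_def[abs_def] R_def by (intro tendsto_mult_left tendsto_sum pair) auto
  then have "eventually (\<lambda>t. \<bar>lj_remainder t\<bar> < \<bar>R\<bar> + 1) (at_left T)"
    by (intro order_tendstoD(2)[OF tendsto_rabs]) auto
  then show ?thesis by (auto elim!: eventually_mono intro!: exI[of _ "\<bar>R\<bar> + 1"])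
qed

lemma potential_tendsto_at_top: "filterlim (\<lambda>t. potential m N (q t)) at_top (at_left T)"
proof -
  obtain a b where ab: "a \<in> G" "b \<in> G" "a \<noteq> b" by (rule cluster_pair)
  have mab: "m a * m b > 0" using ab cluster_masses_pos by simp
  have "((\<lambda>t. norm (q t a - q t b)) \<longlongrightarrow> norm (L a - L b)) (at_left T)"
    using ab cluster_subset by (intro tendsto_intros q_tendsto) auto
  then have "((\<lambda>t. norm (q t a - q t b)) \<longlongrightarrow> 0) (at_left T)"
    using ab cluster_limit by simp
  moreover have "eventually (\<lambda>t. 0 < norm (q t a - q t b)) (at_left T)"
  proof (rule eventually_mono[OF eventually_at_left_real[OF t0_less_T]])
    fix t assume "t \<in> {t0<..<T}"
    then have "q t a \<noteq> q t b" using ab cluster_subset by (intro collision_free) auto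
    then show "0 < norm (q t a - q t b)" by simp
  qed
  ultimately have "filterlim (\<lambda>t. inverse (norm (q t a - q t b))) at_top (at_left T)"
    by (rule filterlim_inverse_at_top)
  from filterlim_tendsto_pos_mult_at_top[OF tendsto_const _ this, of "(1/2) * (m a * m b)"]
  have "filterlim (\<lambda>t. (1/2) * (m a * m b) * inverse (norm (q t a - q t b))) at_top (at_left T)"
    using mab by simp
  moreover have "(\<lambda>t. (1/2) * (m a * m b) * inverse (norm (q t a - q t b)))
      = (\<lambda>t. (1/2) * (m a * m b / norm (q t a - q t b)))"
    by (simp only: divide_inverse mult.assoc)
  moreover have "(1/2) * (m a * m b / norm (q t a - q t b)) \<le> potential m N (q t)" for t
    by (rule potential_ge_pair) (use ab cluster_subset masses_nonneg in auto)
  ultimately show ?thesis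
    by (auto intro: filterlim_at_top_mono always_eventually)
qed

lemma eventually_inertia''_nonneg: "eventually (\<lambda>t. inertia'' t \<ge> 0) (at_left T)"
proof -
  obtain B where B: "eventually (\<lambda>t. \<bar>lj_remainder t\<bar> \<le> B) (at_left T)"
    using lj_remainder_bounded by blast
  have U: "eventually (\<lambda>t. 2 * \<bar>energy_level\<bar> + \<bar>B\<bar> \<le> potential m N (q t)) (at_left T)"
    using potential_tendsto_at_top by (simp add: filterlim_at_top)
  show ?thesis
    using eventually_conj[OF eventually_at_left_real[OF t0_less_T] eventually_conj[OF B U]]
  proof (rule eventually_mono)
    fix t assume t: "t \<in> {t0<..<T} \<and> \<bar>lj_remainder t\<bar> \<le> B \<and> 2 * \<bar>energy_level\<bar> + \<bar>B\<bar> \<le> potential m N (q t)"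
    then show "inertia'' t \<ge> 0"
      using inertia''_eq_potential[of t] abs_ge_minus_self[of energy_level] abs_ge_self[of B]
        abs_le_D2[of "lj_remainder t" B] by linarith
  qed
qed

lemma eventually_inertia_defect:
  "\<exists>c\<ge>0. eventually (\<lambda>t. 2 * inertia t * inertia'' t - inertia' t ^ 2 / 2 \<ge> - c * inertia t) (at_left T)"
proof -
  obtain B where B: "eventually (\<lambda>t. \<bar>lj_remainder t\<bar> \<le> B) (at_left T)"
    using lj_remainder_bounded by blast
  have "eventually (\<lambda>t. 2 * inertia t * inertia'' t - inertia' t ^ 2 / 2
      \<ge> - (4 * \<bar>energy_level\<bar> + 4 * \<bar>B\<bar>) * inertia t) (at_left T)"
    using eventually_conj[OF eventually_at_left_real[OF t0_less_T] B]
  proof (rule eventually_mono)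
    fix t assume t: "t \<in> {t0<..<T} \<and> \<bar>lj_remainder t\<bar> \<le> B"
    have "inertia'' t \<ge> twice_kinetic t - 2 * \<bar>energy_level\<bar> - 2 * \<bar>B\<bar>"
      using t inertia''_eq_kinetic[of t] abs_ge_minus_self[of energy_level] abs_ge_self[of B]
        abs_le_D2[of "lj_remainder t" B] by linarith
    then have "2 * inertia t * inertia'' t \<ge> 2 * inertia t * (twice_kinetic t - 2 * \<bar>energy_level\<bar> - 2 * \<bar>B\<bar>)"
      using inertia_nonneg[of t] by (intro mult_left_mono) auto
    with inertia'_sq_le[of t]
    show "2 * inertia t * inertia'' t - inertia' t ^ 2 / 2 \<ge> - (4 * \<bar>energy_level\<bar> + 4 * \<bar>B\<bar>) * inertia t"
      by (simp add: algebra_simps)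
  qed
  then show ?thesis by (intro exI[of _ "4 * \<bar>energy_level\<bar> + 4 * \<bar>B\<bar>"]) simp
qed

lemma eventually_inertia'_nonpos: "eventually (\<lambda>t. inertia' t \<le> 0) (at_left T)"
proof -
  obtain s where s: "t0 \<le> s" "s < T" and convex: "\<And>t. t \<in> {s<..<T} \<Longrightarrow> inertia'' t \<ge> 0"
    using eventually_at_left_imp_interval[OF eventually_inertia''_nonneg t0_less_T] by blast
  have sub: "t \<in> {t0<..<T}" if "t \<in> {s<..<T}" for t using that s by auto
  show ?thesis
    using eventually_at_left_real[OF s(2)]
    by (rule eventually_mono) (rule deriv_nonpos_of_convex_tendsto_0[OF inertia_deriv[OF sub]
        inertia'_deriv[OF sub] inertia_pos[OF sub] convex inertia_tendsto_0])
qed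

lemma inertia_collapse_rate: "\<exists>K\<ge>0. eventually (\<lambda>t. inertia t \<le> K * (T - t) powr (4/3)) (at_left T)"
proof -
  obtain c where c: "c \<ge> 0"
    and ev: "eventually (\<lambda>t. 2 * inertia t * inertia'' t - inertia' t ^ 2 / 2 \<ge> - c * inertia t) (at_left T)"
    using eventually_inertia_defect by blast
  obtain s where s: "t0 \<le> s" "s < T"
    and defect: "\<And>t. t \<in> {s<..<T} \<Longrightarrow> 2 * inertia t * inertia'' t - inertia' t ^ 2 / 2 \<ge> - c * inertia t"
    using eventually_at_left_imp_interval[OF ev t0_less_T] by blast
  obtain s' where s': "t0 \<le> s'" "s' < T" and convex: "\<And>t. t \<in> {s'<..<T} \<Longrightarrow> inertia'' t \<ge> 0"
    using eventually_at_left_imp_interval[OF eventually_inertia''_nonneg t0_less_T] by blast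
  define a where "a = max s s'"
  have a: "a < T" using s s' by (simp add: a_def)
  have sub: "t \<in> {t0<..<T}" if "t \<in> {a<..<T}" for t using that s by (auto simp: a_def)
  show ?thesis
  proof (rule collapse_rate[OF inertia_deriv[OF sub] inertia'_deriv[OF sub] inertia_pos[OF sub] _ _ c
        inertia_tendsto_0 a])
    fix t assume "t \<in> {a<..<T}"
    then have "t \<in> {s<..<T}" "t \<in> {s'<..<T}" by (auto simp: a_def)
    then show "inertia'' t \<ge> 0" "2 * inertia t * inertia'' t - inertia' t ^ 2 / 2 \<ge> - c * inertia t"
      using convex defect by blast+
  qed
qed

end

section \<open>Angular momentum of the cluster\<close>

locale cluster_collision = nbody_collision n m t0 T q qd qdd G L LG
  for n m t0 T and q qd qdd :: "real \<Rightarrow> nat \<Rightarrow> 'a::euclidean_space" and G L LG +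
  fixes cr :: "'a \<Rightarrow> 'a \<Rightarrow> 'b::real_inner"
  assumes cross_bilinear: "bounded_bilinear cr"
    and lagrange: "\<And>x v. (x \<bullet> v)^2 + (norm (cr x v))^2 \<le> (norm x)^2 * (norm v)^2"
begin

interpretation cr: bounded_bilinear cr by (fact cross_bilinear)

lemma cross_self: "cr x x = 0"
proof -
  have "(x \<bullet> x)^2 = (norm x)^2 * (norm x)^2" by (simp add: dot_square_norm)
  then have "(norm (cr x x))^2 \<le> 0" using lagrange[of x x] by simp
  then show ?thesis by simp
qed

lemma norm_cross_le: "norm (cr x v) \<le> norm x * norm v"
proof (rule power2_le_imp_le)
  show "(norm (cr x v))^2 \<le> (norm x * norm v)^2"
    using lagrange[of x v] zero_le_power2[of "x \<bullet> v"] unfolding power_mult_distrib by linarith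
qed simp

lemma cluster_mass_pos: "(\<Sum>i\<in>G. m i) > 0"
  using cluster_card finite_cluster cluster_masses_pos by (intro sum_pos) auto

definition rel_pos :: "real \<Rightarrow> nat \<Rightarrow> 'a" where "rel_pos t i = q t i - cmass m G (q t)"
definition rel_vel :: "real \<Rightarrow> nat \<Rightarrow> 'a" where "rel_vel t i = qd t i - cmass m G (qd t)"
definition rel_acc :: "real \<Rightarrow> nat \<Rightarrow> 'a" where "rel_acc t i = qdd t i - cmass m G (qdd t)"

lemma rel_pos_deriv: "t \<in> {t0<..<T} \<Longrightarrow> i \<in> G \<Longrightarrow> ((\<lambda>s. rel_pos s i) has_vector_derivative rel_vel t i) (at t)"
  unfolding rel_pos_def rel_vel_def using cluster_subset
  by (intro has_vector_derivative_diff q_deriv has_vector_derivative_cmass) auto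

lemma rel_vel_deriv: "t \<in> {t0<..<T} \<Longrightarrow> i \<in> G \<Longrightarrow> ((\<lambda>s. rel_vel s i) has_vector_derivative rel_acc t i) (at t)"
  unfolding rel_vel_def rel_acc_def using cluster_subset
  by (intro has_vector_derivative_diff qd_deriv has_vector_derivative_cmass) auto

lemma sum_rel_pos: "(\<Sum>i\<in>G. m i *\<^sub>R rel_pos t i) = 0"
  unfolding rel_pos_def using cluster_mass_pos by (intro sum_cmass_deviation) simp

lemma sum_rel_vel: "(\<Sum>i\<in>G. m i *\<^sub>R rel_vel t i) = 0"
  unfolding rel_vel_def using cluster_mass_pos by (intro sum_cmass_deviation) simp

lemma sum_rel_pos_inner: "(\<Sum>i\<in>G. m i * (rel_pos t i \<bullet> v)) = 0"
proof -
  have "(\<Sum>i\<in>G. m i * (rel_pos t i \<bullet> v)) = (\<Sum>i\<in>G. m i *\<^sub>R rel_pos t i) \<bullet> v" by (simp add: inner_sum_left)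
  then show ?thesis by (simp add: sum_rel_pos)
qed

lemma sum_rel_vel_inner: "(\<Sum>i\<in>G. m i * (rel_vel t i \<bullet> v)) = 0"
proof -
  have "(\<Sum>i\<in>G. m i * (rel_vel t i \<bullet> v)) = (\<Sum>i\<in>G. m i *\<^sub>R rel_vel t i) \<bullet> v" by (simp add: inner_sum_left)
  then show ?thesis by (simp add: sum_rel_vel)
qed

lemma sum_rel_pos_cross: "(\<Sum>i\<in>G. m i *\<^sub>R cr (rel_pos t i) v) = 0"
proof -
  have "(\<Sum>i\<in>G. m i *\<^sub>R cr (rel_pos t i) v) = cr (\<Sum>i\<in>G. m i *\<^sub>R rel_pos t i) v"
    by (simp add: cr.sum_left cr.scaleR_left)
  then show ?thesis by (simp add: sum_rel_pos cr.zero_left)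
qed

lemma ang_mom0_rel: "ang_mom0 cr m G q qd t = (\<Sum>i\<in>G. m i *\<^sub>R cr (rel_pos t i) (rel_vel t i))"
  by (simp add: ang_mom0_def rel_pos_def rel_vel_def)

definition ang_mom0' :: "real \<Rightarrow> 'b" where
  "ang_mom0' t = (\<Sum>i\<in>G. m i *\<^sub>R cr (rel_pos t i) (rel_acc t i))"

lemma ang_mom0_deriv:
  assumes t: "t \<in> {t0<..<T}"
  shows "(ang_mom0 cr m G q qd has_vector_derivative ang_mom0' t) (at t)"
proof -
  have "((\<lambda>s. \<Sum>i\<in>G. m i *\<^sub>R cr (rel_pos s i) (rel_vel s i)) has_vector_derivative
      (\<Sum>i\<in>G. m i *\<^sub>R (cr (rel_pos t i) (rel_acc t i) + cr (rel_vel t i) (rel_vel t i)))) (at t)"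
    using t by (intro has_vector_derivative_sum bounded_linear.has_vector_derivative[OF bounded_linear_scaleR_right]
          cr.has_vector_derivative rel_pos_deriv rel_vel_deriv)
  moreover have "(\<lambda>s. \<Sum>i\<in>G. m i *\<^sub>R cr (rel_pos s i) (rel_vel s i)) = ang_mom0 cr m G q qd"
    by (simp add: fun_eq_iff ang_mom0_rel)
  ultimately show ?thesis by (simp add: ang_mom0'_def cross_self)
qed

definition cluster_inertia :: "real \<Rightarrow> real" where
  "cluster_inertia t = (\<Sum>i\<in>G. m i * (rel_pos t i \<bullet> rel_pos t i))"

definition cluster_inertia' :: "real \<Rightarrow> real" where
  "cluster_inertia' t = 2 * (\<Sum>i\<in>G. m i * (rel_pos t i \<bullet> rel_vel t i))"

definition cluster_inertia'' :: "real \<Rightarrow> real" where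
  "cluster_inertia'' t = 2 * (\<Sum>i\<in>G. m i * (rel_pos t i \<bullet> rel_acc t i + rel_vel t i \<bullet> rel_vel t i))"

definition cluster_twice_kinetic :: "real \<Rightarrow> real" where
  "cluster_twice_kinetic t = (\<Sum>i\<in>G. m i * (rel_vel t i \<bullet> rel_vel t i))"

definition cluster_energy :: "real \<Rightarrow> real" where
  "cluster_energy t = cluster_twice_kinetic t / 2 - potential m G (q t)"

definition outer_field :: "real \<Rightarrow> 'a" where
  "outer_field t = (\<Sum>j\<in>N-G. m j *\<^sub>R grav (q t j - cmass m G (q t)))"

definition tidal :: "real \<Rightarrow> nat \<Rightarrow> 'a" where
  "tidal t i = newton_force m (N - G) (q t) i - outer_field t"

lemma cluster_inertia_alt: "cluster_inertia t = (\<Sum>i\<in>G. m i * (norm (rel_pos t i))^2)"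
  by (simp add: cluster_inertia_def power2_norm_eq_inner)

lemma cluster_twice_kinetic_alt: "cluster_twice_kinetic t = (\<Sum>i\<in>G. m i * (norm (rel_vel t i))^2)"
  by (simp add: cluster_twice_kinetic_def power2_norm_eq_inner)

lemma cluster_inertia_nonneg: "cluster_inertia t \<ge> 0"
  unfolding cluster_inertia_alt using cluster_masses_pos by (intro sum_nonneg mult_nonneg_nonneg) (auto simp: less_imp_le)

lemma cluster_twice_kinetic_nonneg: "cluster_twice_kinetic t \<ge> 0"
  unfolding cluster_twice_kinetic_alt using cluster_masses_pos
  by (intro sum_nonneg mult_nonneg_nonneg) (auto simp: less_imp_le)

lemma cluster_inertia_deriv: "t \<in> {t0<..<T} \<Longrightarrow> (cluster_inertia has_real_derivative cluster_inertia' t) (at t)"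
proof -
  assume t: "t \<in> {t0<..<T}"
  have "(cluster_inertia has_real_derivative (\<Sum>i\<in>G. m i * (rel_pos t i \<bullet> rel_vel t i + rel_vel t i \<bullet> rel_pos t i))) (at t)"
    unfolding cluster_inertia_def[abs_def] using t by (intro has_real_derivative_weighted_sum_inner rel_pos_deriv)
  then show ?thesis by (simp add: cluster_inertia'_def inner_commute sum_distrib_left algebra_simps)
qed

lemma cluster_inertia'_deriv: "t \<in> {t0<..<T} \<Longrightarrow> (cluster_inertia' has_real_derivative cluster_inertia'' t) (at t)"
  unfolding cluster_inertia'_def[abs_def] cluster_inertia''_def
  by (intro DERIV_cmult has_real_derivative_weighted_sum_inner rel_pos_deriv rel_vel_deriv)

lemma newton_law_cluster:
  assumes t: "t \<in> {t0..<T}" and i: "i \<in> G"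
  shows "qdd t i = newton_force m G (q t) i + newton_force m (N - G) (q t) i"
proof -
  have "N = G \<union> (N - G)" using cluster_subset by auto
  then have "newton_force m N (q t) i = newton_force m G (q t) i + newton_force m (N - G) (q t) i"
    using finite_cluster by (metis Diff_disjoint finite_Diff finite_atLeastAtMost newton_force_union)
  then show ?thesis using newton_law[OF t] i cluster_subset by auto
qed

lemma rel_acc_internal_tidal:
  assumes t: "t \<in> {t0..<T}" and i: "i \<in> G"
  shows "rel_acc t i = newton_force m G (q t) i + tidal t i + (outer_field t - cmass m G (qdd t))"
  using newton_law_cluster[OF t i] by (simp add: rel_acc_def tidal_def)

lemma sum_rel_pos_rel_acc:
  assumes t: "t \<in> {t0..<T}"
  shows "(\<Sum>i\<in>G. m i * (rel_pos t i \<bullet> rel_acc t i)) = - potential m G (q t) + (\<Sum>i\<in>G. m i * (rel_pos t i \<bullet> tidal t i))"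
proof -
  have "(\<Sum>i\<in>G. m i * (rel_pos t i \<bullet> rel_acc t i)) = (\<Sum>i\<in>G. m i * (rel_pos t i \<bullet> newton_force m G (q t) i))
      + (\<Sum>i\<in>G. m i * (rel_pos t i \<bullet> tidal t i)) + (\<Sum>i\<in>G. m i * (rel_pos t i \<bullet> (outer_field t - cmass m G (qdd t))))"
    using t by (simp add: rel_acc_internal_tidal inner_add_right distrib_left sum.distrib)
  moreover have "(\<Sum>i\<in>G. m i * (rel_pos t i \<bullet> newton_force m G (q t) i)) = - potential m G (q t)"
    using virial_identity[OF finite_cluster, of m "q t" "\<lambda>_. cmass m G (q t)"] by (simp add: rel_pos_def)
  ultimately show ?thesis by (simp add: sum_rel_pos_inner)
qed

lemma cluster_lagrange_jacobi:
  assumes t: "t \<in> {t0<..<T}"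
  shows "cluster_inertia'' t = 2 * cluster_twice_kinetic t - 2 * potential m G (q t)
      + 2 * (\<Sum>i\<in>G. m i * (rel_pos t i \<bullet> tidal t i))"
  using t sum_rel_pos_rel_acc[of t]
  by (simp add: cluster_inertia''_def cluster_twice_kinetic_def distrib_left sum.distrib)

lemma cluster_energy_deriv:
  assumes t: "t \<in> {t0<..<T}"
  shows "(cluster_energy has_real_derivative (\<Sum>i\<in>G. m i * (rel_vel t i \<bullet> tidal t i))) (at t)"
proof -
  have "(cluster_twice_kinetic has_real_derivative (\<Sum>i\<in>G. m i * (rel_vel t i \<bullet> rel_acc t i + rel_acc t i \<bullet> rel_vel t i))) (at t)"
    unfolding cluster_twice_kinetic_def[abs_def] using t by (intro has_real_derivative_weighted_sum_inner rel_vel_deriv)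
  then have "(cluster_energy has_real_derivative
      (\<Sum>i\<in>G. m i * (rel_vel t i \<bullet> rel_acc t i + rel_acc t i \<bullet> rel_vel t i)) / 2
        - (\<Sum>i\<in>G. m i * (qd t i \<bullet> newton_force m G (q t) i))) (at t)"
    unfolding cluster_energy_def[abs_def] using t cluster_subset by (intro DERIV_diff DERIV_cdivide potential_deriv)
  moreover have "(\<Sum>i\<in>G. m i * (rel_vel t i \<bullet> rel_acc t i + rel_acc t i \<bullet> rel_vel t i)) / 2
      = (\<Sum>i\<in>G. m i * (rel_vel t i \<bullet> newton_force m G (q t) i)) + (\<Sum>i\<in>G. m i * (rel_vel t i \<bullet> tidal t i))"
  proof -
    have "(\<Sum>i\<in>G. m i * (rel_vel t i \<bullet> rel_acc t i + rel_acc t i \<bullet> rel_vel t i)) / 2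
        = (\<Sum>i\<in>G. m i * (rel_vel t i \<bullet> rel_acc t i))"
      by (simp add: inner_commute sum_divide_distrib)
    also have "\<dots> = (\<Sum>i\<in>G. m i * (rel_vel t i \<bullet> newton_force m G (q t) i)) + (\<Sum>i\<in>G. m i * (rel_vel t i \<bullet> tidal t i))
        + (\<Sum>i\<in>G. m i * (rel_vel t i \<bullet> (outer_field t - cmass m G (qdd t))))"
      using t by (simp add: rel_acc_internal_tidal inner_add_right distrib_left sum.distrib)
    finally show ?thesis by (simp add: sum_rel_vel_inner)
  qed
  moreover have "(\<Sum>i\<in>G. m i * (qd t i \<bullet> newton_force m G (q t) i)) = (\<Sum>i\<in>G. m i * (rel_vel t i \<bullet> newton_force m G (q t) i))"
    using sum_newton_force_eq_0[OF finite_cluster, of m "q t"]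
    by (simp add: rel_vel_def inner_diff_left right_diff_distrib sum_subtractf inner_sum_right[symmetric]
        flip: inner_scaleR_right)
  ultimately show ?thesis by simp
qed

lemma ang_mom0'_eq:
  assumes t: "t \<in> {t0<..<T}"
  shows "ang_mom0' t = (\<Sum>i\<in>G. m i *\<^sub>R cr (rel_pos t i) (tidal t i))"
proof -
  have "ang_mom0' t = (\<Sum>i\<in>G. m i *\<^sub>R cr (rel_pos t i) (newton_force m G (q t) i))
      + (\<Sum>i\<in>G. m i *\<^sub>R cr (rel_pos t i) (tidal t i))
      + (\<Sum>i\<in>G. m i *\<^sub>R cr (rel_pos t i) (outer_field t - cmass m G (qdd t)))"
    using t by (simp add: ang_mom0'_def rel_acc_internal_tidal cr.add_right scaleR_add_right sum.distrib)
  moreover have "(\<Sum>i\<in>G. m i *\<^sub>R cr (rel_pos t i) (newton_force m G (q t) i)) = 0"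
    unfolding rel_pos_def using cross_self by (intro sum_cross_newton_force_eq_0 finite_cluster cross_bilinear)
  ultimately show ?thesis by (simp add: sum_rel_pos_cross)
qed

lemma cmass_tendsto: "((\<lambda>t. cmass m G (q t)) \<longlongrightarrow> LG) (at_left T)"
  using cluster_mass_pos cluster_subset cluster_limit q_tendsto
  by (intro tendsto_cmass) (auto simp: subset_iff)

definition outer_gap :: "nat \<Rightarrow> real" where
  "outer_gap j = norm (L j - LG) / 2"

lemma outer_gap_pos: "j \<in> N - G \<Longrightarrow> outer_gap j > 0"
  using outside_limit by (auto simp: outer_gap_def)

lemma eventually_outer_far:
  assumes j: "j \<in> N - G" and y: "(y \<longlongrightarrow> LG) (at_left T)"
  shows "eventually (\<lambda>t. outer_gap j \<le> norm (q t j - y t)) (at_left T)"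
proof -
  have "((\<lambda>t. norm (q t j - y t)) \<longlongrightarrow> norm (L j - LG)) (at_left T)"
    using j by (intro tendsto_norm tendsto_diff q_tendsto y) auto
  moreover have "outer_gap j < norm (L j - LG)" using outer_gap_pos[OF j] by (simp add: outer_gap_def)
  ultimately have "eventually (\<lambda>t. outer_gap j < norm (q t j - y t)) (at_left T)"
    by (rule order_tendstoD(1))
  then show ?thesis by (rule eventually_mono) simp
qed

lemma norm_tidal_le:
  assumes far: "\<And>j. j \<in> N - G \<Longrightarrow> outer_gap j \<le> norm (q t j - q t i) \<and> outer_gap j \<le> norm (q t j - cmass m G (q t))"
    and i: "i \<in> G"
  shows "norm (tidal t i) \<le> (\<Sum>j\<in>N-G. m j * (4 / outer_gap j ^ 3)) * norm (rel_pos t i)"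
proof -
  have "tidal t i = (\<Sum>j\<in>N-G. m j *\<^sub>R (grav (q t j - q t i) - grav (q t j - cmass m G (q t))))"
    using i by (simp add: tidal_def newton_force_def outer_field_def scaleR_diff_right sum_subtractf
        Diff_insert_absorb[symmetric])
  also have "norm \<dots> \<le> (\<Sum>j\<in>N-G. norm (m j *\<^sub>R (grav (q t j - q t i) - grav (q t j - cmass m G (q t)))))"
    by (rule norm_sum)
  also have "\<dots> \<le> (\<Sum>j\<in>N-G. m j * (4 / outer_gap j ^ 3) * norm (rel_pos t i))"
  proof (rule sum_mono)
    fix j assume j: "j \<in> N - G"
    have "norm (grav (q t j - q t i) - grav (q t j - cmass m G (q t)))
        \<le> 4 / outer_gap j ^ 3 * norm ((q t j - q t i) - (q t j - cmass m G (q t)))"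
      using outer_gap_pos[OF j] far[OF j] by (intro grav_lipschitz) auto
    also have "norm ((q t j - q t i) - (q t j - cmass m G (q t))) = norm (rel_pos t i)"
      by (simp add: rel_pos_def norm_minus_commute)
    finally have "norm (grav (q t j - q t i) - grav (q t j - cmass m G (q t)))
        \<le> 4 / outer_gap j ^ 3 * norm (rel_pos t i)" .
    then have "m j * norm (grav (q t j - q t i) - grav (q t j - cmass m G (q t)))
        \<le> m j * (4 / outer_gap j ^ 3 * norm (rel_pos t i))"
      using masses_nonneg[of j] j by (intro mult_left_mono) auto
    then show "norm (m j *\<^sub>R (grav (q t j - q t i) - grav (q t j - cmass m G (q t))))
        \<le> m j * (4 / outer_gap j ^ 3) * norm (rel_pos t i)"
      using masses_nonneg[of j] j by (simp add: mult.assoc)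
  qed
  also have "\<dots> = (\<Sum>j\<in>N-G. m j * (4 / outer_gap j ^ 3)) * norm (rel_pos t i)"
    by (simp add: sum_distrib_right)
  finally show ?thesis .
qed

lemma tidal_bound: "\<exists>K\<ge>0. eventually (\<lambda>t. \<forall>i\<in>G. norm (tidal t i) \<le> K * norm (rel_pos t i)) (at_left T)"
proof -
  define K where "K = (\<Sum>j\<in>N-G. m j * (4 / outer_gap j ^ 3))"
  have "K \<ge> 0"
    unfolding K_def using masses_nonneg outer_gap_pos
    by (intro sum_nonneg mult_nonneg_nonneg divide_nonneg_pos zero_less_power) auto
  have "eventually (\<lambda>t. \<forall>j\<in>N-G. (\<forall>i\<in>G. outer_gap j \<le> norm (q t j - q t i))
      \<and> outer_gap j \<le> norm (q t j - cmass m G (q t))) (at_left T)"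
    using cluster_subset cluster_limit q_tendsto finite_cluster
    by (intro eventually_ball_finite ballI eventually_conj eventually_outer_far cmass_tendsto) (auto simp: subset_iff)
  then have "eventually (\<lambda>t. \<forall>i\<in>G. norm (tidal t i) \<le> K * norm (rel_pos t i)) (at_left T)"
    unfolding K_def by (rule eventually_mono) (blast intro: norm_tidal_le)
  with \<open>K \<ge> 0\<close> show ?thesis by blast
qed

lemma cluster_inertia_le: "cluster_inertia t \<le> inertia t"
proof -
  have "cluster_inertia t \<le> (\<Sum>i\<in>G. m i * (norm (q t i - LG))^2)"
    unfolding cluster_inertia_alt rel_pos_def using cluster_mass_pos cluster_masses_pos
    by (intro cmass_inertia_le) (auto simp: less_imp_le)
  also have "\<dots> = (\<Sum>i\<in>G. m i * ((q t i - L i) \<bullet> (q t i - L i)))"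
    using cluster_limit by (simp add: power2_norm_eq_inner)
  also have "\<dots> \<le> inertia t"
    unfolding inertia_def using cluster_subset masses_nonneg by (intro sum_mono2) auto
  finally show ?thesis .
qed

lemma cluster_twice_kinetic_le: "cluster_twice_kinetic t \<le> twice_kinetic t"
proof -
  have "cluster_twice_kinetic t \<le> (\<Sum>i\<in>G. m i * (norm (qd t i - 0))^2)"
    unfolding cluster_twice_kinetic_alt rel_vel_def using cluster_mass_pos cluster_masses_pos
    by (intro cmass_inertia_le) (auto simp: less_imp_le)
  also have "\<dots> \<le> twice_kinetic t"
    unfolding twice_kinetic_def using cluster_subset masses_nonneg
    by (simp add: power2_norm_eq_inner) (intro sum_mono2, auto)
  finally show ?thesis .
qed

lemma cluster_inertia_pos: "t \<in> {t0<..<T} \<Longrightarrow> cluster_inertia t > 0"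
proof -
  assume t: "t \<in> {t0<..<T}"
  obtain a b where ab: "a \<in> G" "b \<in> G" "a \<noteq> b" by (rule cluster_pair)
  then have "q t a \<noteq> q t b" using t cluster_subset by (intro collision_free) auto
  then have "rel_pos t a \<noteq> 0 \<or> rel_pos t b \<noteq> 0" by (auto simp: rel_pos_def)
  then obtain i where i: "i \<in> G" "rel_pos t i \<noteq> 0" using ab by auto
  have "0 < m i * (rel_pos t i \<bullet> rel_pos t i)" using i cluster_masses_pos by simp
  also have "\<dots> \<le> cluster_inertia t"
    unfolding cluster_inertia_def using i finite_cluster cluster_masses_pos
    by (intro member_le_sum mult_nonneg_nonneg) (auto intro: less_imp_le)
  finally show ?thesis .
qed

lemma cluster_inertia_tendsto_0: "(cluster_inertia \<longlongrightarrow> 0) (at_left T)"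
proof -
  have "(cluster_inertia \<longlongrightarrow> (\<Sum>i\<in>G. m i * ((LG - LG) \<bullet> (LG - LG)))) (at_left T)"
    unfolding cluster_inertia_def[abs_def] rel_pos_def using cluster_subset cluster_limit q_tendsto
    by (intro tendsto_sum tendsto_mult tendsto_const tendsto_inner tendsto_diff cmass_tendsto) (auto simp: subset_iff)
  then show ?thesis by simp
qed

lemma norm_ang_mom0'_le:
  assumes t: "t \<in> {t0<..<T}" and tidal: "\<forall>i\<in>G. norm (tidal t i) \<le> K * norm (rel_pos t i)"
  shows "norm (ang_mom0' t) \<le> K * cluster_inertia t"
proof -
  have "norm (ang_mom0' t) \<le> (\<Sum>i\<in>G. norm (m i *\<^sub>R cr (rel_pos t i) (tidal t i)))"
    unfolding ang_mom0'_eq[OF t] by (rule norm_sum)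
  also have "\<dots> \<le> (\<Sum>i\<in>G. m i * (K * (norm (rel_pos t i))^2))"
  proof (rule sum_mono)
    fix i assume i: "i \<in> G"
    have "norm (cr (rel_pos t i) (tidal t i)) \<le> norm (rel_pos t i) * (K * norm (rel_pos t i))"
      using norm_cross_le[of "rel_pos t i" "tidal t i"] tidal i
      by (meson mult_left_mono norm_ge_zero order_trans)
    then show "norm (m i *\<^sub>R cr (rel_pos t i) (tidal t i)) \<le> m i * (K * (norm (rel_pos t i))^2)"
      using cluster_masses_pos[OF i] by (simp add: power2_eq_square algebra_simps)
  qed
  also have "\<dots> = K * cluster_inertia t" by (simp add: cluster_inertia_alt sum_distrib_left algebra_simps)
  finally show ?thesis .
qed

lemma abs_sum_rel_pos_tidal_le:
  assumes tidal: "\<forall>i\<in>G. norm (tidal t i) \<le> K * norm (rel_pos t i)"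
  shows "\<bar>\<Sum>i\<in>G. m i * (rel_pos t i \<bullet> tidal t i)\<bar> \<le> K * cluster_inertia t"
proof -
  have "\<bar>\<Sum>i\<in>G. m i * (rel_pos t i \<bullet> tidal t i)\<bar> \<le> (\<Sum>i\<in>G. \<bar>m i * (rel_pos t i \<bullet> tidal t i)\<bar>)"
    by (rule sum_abs)
  also have "\<dots> \<le> (\<Sum>i\<in>G. m i * (K * (norm (rel_pos t i))^2))"
  proof (rule sum_mono)
    fix i assume i: "i \<in> G"
    have "\<bar>rel_pos t i \<bullet> tidal t i\<bar> \<le> norm (rel_pos t i) * (K * norm (rel_pos t i))"
      using Cauchy_Schwarz_ineq2[of "rel_pos t i" "tidal t i"] tidal i
      by (meson mult_left_mono norm_ge_zero order_trans)
    then show "\<bar>m i * (rel_pos t i \<bullet> tidal t i)\<bar> \<le> m i * (K * (norm (rel_pos t i))^2)"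
      using cluster_masses_pos[OF i] by (simp add: abs_mult power2_eq_square algebra_simps)
  qed
  also have "\<dots> = K * cluster_inertia t" by (simp add: cluster_inertia_alt sum_distrib_left algebra_simps)
  finally show ?thesis .
qed

lemma abs_sum_rel_vel_tidal_le:
  assumes tidal: "\<forall>i\<in>G. norm (tidal t i) \<le> K * norm (rel_pos t i)"
    and "K \<ge> 0" and small: "cluster_inertia t \<le> 1"
  shows "\<bar>\<Sum>i\<in>G. m i * (rel_vel t i \<bullet> tidal t i)\<bar> \<le> K * (1 + cluster_twice_kinetic t)"
proof -
  have "\<bar>\<Sum>i\<in>G. m i * (rel_vel t i \<bullet> tidal t i)\<bar> \<le> (\<Sum>i\<in>G. \<bar>m i * (rel_vel t i \<bullet> tidal t i)\<bar>)"
    by (rule sum_abs)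
  also have "\<dots> \<le> (\<Sum>i\<in>G. K * (m i * norm (rel_vel t i) * norm (rel_pos t i)))"
  proof (rule sum_mono)
    fix i assume i: "i \<in> G"
    have "\<bar>rel_vel t i \<bullet> tidal t i\<bar> \<le> norm (rel_vel t i) * (K * norm (rel_pos t i))"
      using Cauchy_Schwarz_ineq2[of "rel_vel t i" "tidal t i"] tidal i
      by (meson mult_left_mono norm_ge_zero order_trans)
    then have "m i * \<bar>rel_vel t i \<bullet> tidal t i\<bar> \<le> m i * (norm (rel_vel t i) * (K * norm (rel_pos t i)))"
      using cluster_masses_pos[OF i] by (intro mult_left_mono) auto
    then show "\<bar>m i * (rel_vel t i \<bullet> tidal t i)\<bar> \<le> K * (m i * norm (rel_vel t i) * norm (rel_pos t i))"
      using cluster_masses_pos[OF i] by (simp add: abs_mult mult_ac)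
  qed
  also have "\<dots> = K * (\<Sum>i\<in>G. m i * norm (rel_vel t i) * norm (rel_pos t i))"
    by (simp add: sum_distrib_left)
  also have "\<dots> \<le> K * (1 + cluster_twice_kinetic t)"
  proof (rule mult_left_mono[OF _ \<open>K \<ge> 0\<close>])
    have "(\<Sum>i\<in>G. m i * norm (rel_vel t i) * norm (rel_pos t i))^2 \<le> cluster_twice_kinetic t * cluster_inertia t"
      unfolding cluster_twice_kinetic_alt cluster_inertia_alt
      using cluster_masses_pos by (intro weighted_Cauchy_Schwarz) (auto intro: less_imp_le)
    also have "\<dots> \<le> cluster_twice_kinetic t"
      using small cluster_twice_kinetic_nonneg[of t] by (rule mult_left_le)
    also have "\<dots> \<le> (1 + cluster_twice_kinetic t)^2"
    proof -
      have "1 + cluster_twice_kinetic t \<le> (1 + cluster_twice_kinetic t)^2"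
        using cluster_twice_kinetic_nonneg[of t] by (intro self_le_power) auto
      then show ?thesis by linarith
    qed
    finally show "(\<Sum>i\<in>G. m i * norm (rel_vel t i) * norm (rel_pos t i)) \<le> 1 + cluster_twice_kinetic t"
      by (rule power2_le_imp_le) (use cluster_twice_kinetic_nonneg[of t] in auto)
  qed
  finally show ?thesis .
qed

lemma ang_mom0'_rate: "\<exists>C\<ge>0. eventually (\<lambda>t. norm (ang_mom0' t) \<le> C * (T - t) powr (4/3)) (at_left T)"
proof -
  obtain K where K: "K \<ge> 0"
    and tidal: "eventually (\<lambda>t. \<forall>i\<in>G. norm (tidal t i) \<le> K * norm (rel_pos t i)) (at_left T)"
    using tidal_bound by blast
  obtain K' where K': "K' \<ge> 0" and rate: "eventually (\<lambda>t. inertia t \<le> K' * (T - t) powr (4/3)) (at_left T)"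
    using inertia_collapse_rate by blast
  have "eventually (\<lambda>t. norm (ang_mom0' t) \<le> K * K' * (T - t) powr (4/3)) (at_left T)"
    using eventually_conj[OF eventually_at_left_real[OF t0_less_T] eventually_conj[OF tidal rate]]
  proof (rule eventually_mono)
    fix t assume t: "t \<in> {t0<..<T} \<and> (\<forall>i\<in>G. norm (tidal t i) \<le> K * norm (rel_pos t i))
      \<and> inertia t \<le> K' * (T - t) powr (4/3)"
    then have "norm (ang_mom0' t) \<le> K * cluster_inertia t" by (intro norm_ang_mom0'_le) auto
    also have "\<dots> \<le> K * inertia t" using K cluster_inertia_le by (rule mult_left_mono[rotated])
    also have "\<dots> \<le> K * (K' * (T - t) powr (4/3))" using K t by (intro mult_left_mono) auto
    finally show "norm (ang_mom0' t) \<le> K * K' * (T - t) powr (4/3)" by (simp add: mult.assoc)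
  qed
  then show ?thesis using K K' by (intro exI[of _ "K * K'"]) simp
qed

lemma cluster_energy_deriv_lower:
  assumes t: "t \<in> {t0<..<T}" and tidal: "\<forall>i\<in>G. norm (tidal t i) \<le> K * norm (rel_pos t i)"
    and "K \<ge> 0" "cluster_inertia t \<le> 1" "\<bar>lj_remainder t\<bar> \<le> B"
  shows "(\<Sum>i\<in>G. m i * (rel_vel t i \<bullet> tidal t i)) \<ge> - K * (1 + 2 * \<bar>energy_level\<bar> + 2 * \<bar>B\<bar> + inertia'' t)"
proof -
  have "\<bar>\<Sum>i\<in>G. m i * (rel_vel t i \<bullet> tidal t i)\<bar> \<le> K * (1 + cluster_twice_kinetic t)"
    using assms by (intro abs_sum_rel_vel_tidal_le) auto
  moreover have "1 + cluster_twice_kinetic t \<le> 1 + 2 * \<bar>energy_level\<bar> + 2 * \<bar>B\<bar> + inertia'' t"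
    using cluster_twice_kinetic_le[of t] inertia''_eq_kinetic[OF t] assms(5)
      abs_ge_minus_self[of energy_level] abs_ge_self[of B] abs_le_D2[of "lj_remainder t" B]
    by linarith
  then have "K * (1 + cluster_twice_kinetic t) \<le> K * (1 + 2 * \<bar>energy_level\<bar> + 2 * \<bar>B\<bar> + inertia'' t)"
    using \<open>K \<ge> 0\<close> by (rule mult_left_mono)
  ultimately show ?thesis by linarith
qed

lemma cluster_energy_bounded_below: "\<exists>E. eventually (\<lambda>t. cluster_energy t \<ge> - E) (at_left T)"
proof -
  obtain K where K: "K \<ge> 0"
    and tidal: "eventually (\<lambda>t. \<forall>i\<in>G. norm (tidal t i) \<le> K * norm (rel_pos t i)) (at_left T)"
    using tidal_bound by blast
  obtain B where B: "eventually (\<lambda>t. \<bar>lj_remainder t\<bar> \<le> B) (at_left T)"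
    using lj_remainder_bounded by blast
  have small: "eventually (\<lambda>t. cluster_inertia t \<le> 1) (at_left T)"
    using order_tendstoD(2)[OF cluster_inertia_tendsto_0, of 1] by (simp add: eventually_mono)
  obtain s where s: "t0 \<le> s" "s < T" and good: "\<And>t. t \<in> {s<..<T} \<Longrightarrow>
      (\<forall>i\<in>G. norm (tidal t i) \<le> K * norm (rel_pos t i)) \<and> \<bar>lj_remainder t\<bar> \<le> B
      \<and> cluster_inertia t \<le> 1 \<and> inertia' t \<le> 0"
    using eventually_at_left_imp_interval[OF eventually_conj[OF tidal eventually_conj[OF B
          eventually_conj[OF small eventually_inertia'_nonpos]]] t0_less_T] by blast
  have sub: "t \<in> {t0<..<T}" if "t \<in> {s<..<T}" for t using that s by auto
  define c where "c = 1 + 2 * \<bar>energy_level\<bar> + 2 * \<bar>B\<bar>"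
  \<comment> \<open>the tidal work done on the cluster is controlled by \<open>inertia''\<close>, so \<open>g\<close> is nondecreasing\<close>
  define g where "g x = cluster_energy x + K * (c * x + inertia' x)" for x
  define g' where "g' x = (\<Sum>i\<in>G. m i * (rel_vel x i \<bullet> tidal x i)) + K * (c + inertia'' x)" for x
  have deriv: "(g has_real_derivative g' x) (at x)" if x: "x \<in> {s<..<T}" for x
  proof -
    have "((\<lambda>x. c * x + inertia' x) has_real_derivative c + inertia'' x) (at x)"
      using sub[OF x] by (intro DERIV_add DERIV_cmult_Id inertia'_deriv)
    from DERIV_add[OF cluster_energy_deriv[OF sub[OF x]] DERIV_cmult[OF this, of K]]
    show ?thesis unfolding g_def[abs_def] g'_def .
  qed
  have "g' x \<ge> 0" if x: "x \<in> {s<..<T}" for x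
    using cluster_energy_deriv_lower[OF sub[OF x], of K B] good[OF x] K
    by (simp add: g'_def c_def algebra_simps)
  then have mono: "g a \<le> g b" if "s < a" "a \<le> b" "b < T" for a b
    using that deriv by (intro deriv_nonneg_imp_mono[where g=g and g'=g' and a=a and b=b]) auto
  define s2 where "s2 = (s + T) / 2"
  have s2: "s < s2" "s2 < T" using s by (auto simp: s2_def)
  have "eventually (\<lambda>t. cluster_energy t \<ge> - (K * c * T - g s2)) (at_left T)"
  proof (rule eventually_mono[OF eventually_at_left_real[OF s2(2)]])
    fix t assume t: "t \<in> {s2<..<T}"
    have "g s2 \<le> g t" using t s2 by (intro mono) auto
    moreover have "K * inertia' t \<le> 0" using K good[of t] t s2 by (auto intro: mult_nonneg_nonpos)
    moreover have "K * c * t \<le> K * c * T" using K t by (intro mult_left_mono) (auto simp: c_def)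
    ultimately show "cluster_energy t \<ge> - (K * c * T - g s2)" by (simp add: g_def algebra_simps)
  qed
  then show ?thesis by blast
qed

lemma eventually_cluster_defect:
  "\<exists>c\<ge>0. eventually (\<lambda>t. 2 * cluster_inertia t * cluster_inertia'' t - cluster_inertia' t ^ 2 / 2
      \<ge> 2 * (norm (ang_mom0 cr m G q qd t))^2 - c * cluster_inertia t) (at_left T)"
proof -
  obtain K where K: "K \<ge> 0"
    and tidal: "eventually (\<lambda>t. \<forall>i\<in>G. norm (tidal t i) \<le> K * norm (rel_pos t i)) (at_left T)"
    using tidal_bound by blast
  obtain E where E: "eventually (\<lambda>t. cluster_energy t \<ge> - E) (at_left T)"
    using cluster_energy_bounded_below by blast
  have small: "eventually (\<lambda>t. cluster_inertia t \<le> 1) (at_left T)"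
    using order_tendstoD(2)[OF cluster_inertia_tendsto_0, of 1] by (simp add: eventually_mono)
  have "eventually (\<lambda>t. 2 * cluster_inertia t * cluster_inertia'' t - cluster_inertia' t ^ 2 / 2
      \<ge> 2 * (norm (ang_mom0 cr m G q qd t))^2 - (4 * \<bar>E\<bar> + 4 * K) * cluster_inertia t) (at_left T)"
    using eventually_conj[OF eventually_at_left_real[OF t0_less_T] eventually_conj[OF tidal eventually_conj[OF E small]]]
  proof (rule eventually_mono)
    fix t assume t: "t \<in> {t0<..<T} \<and> (\<forall>i\<in>G. norm (tidal t i) \<le> K * norm (rel_pos t i))
      \<and> cluster_energy t \<ge> - E \<and> cluster_inertia t \<le> 1"
    define I where "I = cluster_inertia t"
    define A where "A = (\<Sum>i\<in>G. m i * (rel_pos t i \<bullet> rel_vel t i))"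
    define S where "S = (\<Sum>i\<in>G. m i * (rel_pos t i \<bullet> tidal t i))"
    have I: "0 \<le> I" "I \<le> 1" using t cluster_inertia_nonneg by (auto simp: I_def)
    have "\<bar>S\<bar> \<le> K * I" unfolding S_def I_def using t by (intro abs_sum_rel_pos_tidal_le) auto
    then have "I * (- S) \<le> I * (K * I)" using I by (intro mult_left_mono) auto
    also have "I * (K * I) \<le> K * I" using I K mult_left_le[of I "K * I"] by (simp add: mult.commute)
    finally have "I * S \<ge> - (K * I)" by simp
    moreover have "I * cluster_energy t \<ge> - (\<bar>E\<bar> * I)"
      using t I mult_left_mono[of "- E" "cluster_energy t" I] abs_ge_self[of E] mult_right_mono[of E "\<bar>E\<bar>" I]
      by (auto simp: I_def algebra_simps)
    moreover have "A^2 + (norm (ang_mom0 cr m G q qd t))^2 \<le> I * cluster_twice_kinetic t"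
      unfolding A_def ang_mom0_rel I_def cluster_inertia_alt cluster_twice_kinetic_alt
      using cluster_masses_pos by (intro sundman_inequality[OF lagrange]) (auto intro: less_imp_le)
    moreover have "cluster_inertia'' t = cluster_twice_kinetic t + 2 * cluster_energy t + 2 * S"
      using cluster_lagrange_jacobi[of t] t by (simp add: S_def cluster_energy_def)
    moreover have "cluster_inertia' t = 2 * A" by (simp add: cluster_inertia'_def A_def)
    ultimately show "2 * cluster_inertia t * cluster_inertia'' t - cluster_inertia' t ^ 2 / 2
        \<ge> 2 * (norm (ang_mom0 cr m G q qd t))^2 - (4 * \<bar>E\<bar> + 4 * K) * cluster_inertia t"
      unfolding I_def[symmetric] by (simp add: power2_eq_square algebra_simps)
  qed
  then show ?thesis using K by (intro exI[of _ "4 * \<bar>E\<bar> + 4 * K"]) simp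
qed

lemma ang_mom0_tendsto_0: "(ang_mom0 cr m G q qd \<longlongrightarrow> 0) (at_left T)"
proof -
  obtain C where C: "C \<ge> 0"
    and "eventually (\<lambda>t. norm (ang_mom0' t) \<le> C * (T - t) powr (4/3)) (at_left T)"
    using ang_mom0'_rate by blast
  then obtain a where a: "t0 \<le> a" "a < T" and bound: "\<And>t. t \<in> {a<..<T} \<Longrightarrow> norm (ang_mom0' t) \<le> C * (T - t) powr (4/3)"
    using eventually_at_left_imp_interval[of _ T t0] t0_less_T by blast
  obtain c where c: "c \<ge> 0" and defect: "eventually (\<lambda>t. 2 * cluster_inertia t * cluster_inertia'' t
      - cluster_inertia' t ^ 2 / 2 \<ge> 2 * (norm (ang_mom0 cr m G q qd t))^2 - c * cluster_inertia t) (at_left T)"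
    using eventually_cluster_defect by blast
  have sub: "t \<in> {t0<..<T}" if "t \<in> {a<..<T}" for t using that a by auto
  show ?thesis
  proof (rule tendsto_0_of_tail_oscillation[OF ang_mom0_deriv[OF sub] bound C _ a(2)])
    fix \<epsilon> s :: real assume \<epsilon>: "\<epsilon> > 0" and s: "a < s" "s < T"
    \<comment> \<open>angular momentum bounded away from \<open>0\<close> gives a positive Sundman defect, which no collapse allows\<close>
    show "\<exists>x\<in>{s<..<T}. norm (ang_mom0 cr m G q qd x) < \<epsilon>"
    proof (rule ccontr)
      assume "\<not> ?thesis"
      then have far: "\<epsilon> \<le> norm (ang_mom0 cr m G q qd x)" if "x \<in> {s<..<T}" for x using that by force
      obtain s' where s': "s \<le> s'" "s' < T" and d: "\<And>t. t \<in> {s'<..<T} \<Longrightarrow> 2 * cluster_inertia t * cluster_inertia'' t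
          - cluster_inertia' t ^ 2 / 2 \<ge> 2 * (norm (ang_mom0 cr m G q qd t))^2 - c * cluster_inertia t"
        using eventually_at_left_imp_interval[OF defect s(2)] by blast
      have sub': "t \<in> {t0<..<T}" if "t \<in> {s'<..<T}" for t using that a s s' by auto
      show False
      proof (rule no_collapse_of_positive_defect[where e="2 * \<epsilon>^2" and c=c, OF cluster_inertia_deriv[OF sub']
            cluster_inertia'_deriv[OF sub'] cluster_inertia_pos[OF sub'] _ _ cluster_inertia_tendsto_0 s'(2)])
        fix t assume t: "t \<in> {s'<..<T}"
        have "\<epsilon>^2 \<le> (norm (ang_mom0 cr m G q qd t))^2"
          using far[of t] t s' \<epsilon> by (intro power_mono) auto
        then show "2 * cluster_inertia t * cluster_inertia'' t - cluster_inertia' t ^ 2 / 2 \<ge> 2 * \<epsilon>^2 - c * cluster_inertia t"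
          using d[OF t] by linarith
      qed (use \<epsilon> in auto)
    qed
  qed simp_all
qed

lemma ang_mom0_rate: "\<exists>C\<ge>0. eventually (\<lambda>t. norm (ang_mom0 cr m G q qd t) \<le> C * (T - t) powr (7/3)) (at_left T)"
proof -
  obtain C where C: "C \<ge> 0"
    and "eventually (\<lambda>t. norm (ang_mom0' t) \<le> C * (T - t) powr (4/3)) (at_left T)"
    using ang_mom0'_rate by blast
  then obtain a where a: "t0 \<le> a" "a < T" and bound: "\<And>t. t \<in> {a<..<T} \<Longrightarrow> norm (ang_mom0' t) \<le> C * (T - t) powr (4/3)"
    using eventually_at_left_imp_interval[of _ T t0] t0_less_T by blast
  have sub: "t \<in> {t0<..<T}" if "t \<in> {a<..<T}" for t using that a by auto
  have "norm (ang_mom0 cr m G q qd t) \<le> C * (T - t) powr (4/3 + 1)" if "t \<in> {a<..<T}" for t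
    using norm_le_tail_of_tendsto_0[OF ang_mom0_deriv[OF sub] bound C _ ang_mom0_tendsto_0 that] by simp
  then have "eventually (\<lambda>t. norm (ang_mom0 cr m G q qd t) \<le> C * (T - t) powr (7/3)) (at_left T)"
    using eventually_at_left_real[OF a(2)] by (auto elim!: eventually_mono)
  with C show ?thesis by blast
qed

theorem ang_mom0_bigo:
  "(\<lambda>t. norm (ang_mom0 cr m G q qd t)) \<in> O[at_left T](\<lambda>t. \<bar>T - t\<bar> powr (7/3))"
  "(\<lambda>t. norm (ang_mom0' t)) \<in> O[at_left T](\<lambda>t. \<bar>T - t\<bar> powr (4/3))"
  using ang_mom0_rate ang_mom0'_rate by (auto intro: bigo_at_left_of_eventually_le)

end

lemma cluster_collision_of_setting:
  fixes q qd :: "real \<Rightarrow> nat \<Rightarrow> 'a::euclidean_space" and cr :: "'a \<Rightarrow> 'a \<Rightarrow> 'b::real_inner"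
  assumes setting: "nb_cluster_setting n m t0 T q qd G" and cr: "bounded_bilinear cr"
    and lagrange: "\<And>x v. (x \<bullet> v)^2 + (norm (cr x v))^2 \<le> (norm x)^2 * (norm v)^2"
  shows "\<exists>qdd L LG. cluster_collision n m t0 T q qd qdd G L LG cr"
proof -
  obtain qdd LG where mpos: "\<forall>i\<in>{1..n}. m i > 0" and "t0 < T"
      and distinct: "\<forall>t\<in>{t0..<T}. \<forall>i\<in>{1..n}. \<forall>j\<in>{1..n}. i \<noteq> j \<longrightarrow> q t i \<noteq> q t j"
      and qdd: "\<forall>t\<in>{t0..<T}. \<forall>i\<in>{1..n}.
        ((\<lambda>s. q s i) has_vector_derivative qd t i) (at t within {t0..<T}) \<and>
        ((\<lambda>s. qd s i) has_vector_derivative qdd t i) (at t within {t0..<T}) \<and>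
        ((\<lambda>x. nbU n m ((q t)(i := x))) has_derivative (\<lambda>h. (m i *\<^sub>R qdd t i) \<bullet> h)) (at (q t i))"
      and limits: "\<forall>i\<in>{1..n}. \<exists>L. ((\<lambda>t. q t i) \<longlongrightarrow> L) (at_left T)"
      and "G \<subseteq> {1..n}" "card G \<ge> 2"
      and LG: "\<forall>i\<in>G. ((\<lambda>t. q t i) \<longlongrightarrow> LG) (at_left T)"
        "\<forall>j\<in>{1..n} - G. \<not> ((\<lambda>t. q t j) \<longlongrightarrow> LG) (at_left T)"
    using setting unfolding nb_cluster_setting_def by (elim conjE exE) (rule that)
  obtain L where L: "\<forall>i\<in>{1..n}. ((\<lambda>t. q t i) \<longlongrightarrow> L i) (at_left T)"
    using bchoice[OF limits] by (elim exE)
  have "nbody_collision n m t0 T q qd qdd G L LG"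
  proof
    show "L i = LG" if "i \<in> G" for i
      using tendsto_unique[OF trivial_limit_at_left_real] L LG(1) that \<open>G \<subseteq> {1..n}\<close> by blast
    show "L j \<noteq> LG" if "j \<in> {1..n}" "j \<notin> G" for j
    proof
      assume "L j = LG"
      then have "((\<lambda>t. q t j) \<longlongrightarrow> LG) (at_left T)" using L that by auto
      then show False using LG(2) that by blast
    qed
  qed (use mpos \<open>t0 < T\<close> distinct qdd L \<open>G \<subseteq> {1..n}\<close> \<open>card G \<ge> 2\<close> in auto)
  moreover have "cluster_collision_axioms cr"
    using cr lagrange by (simp add: cluster_collision_axioms_def)
  ultimately show ?thesis by (blast intro: cluster_collision.intro)
qed

lemma ang_mom0_asymptotics:
  fixes q qd :: "real \<Rightarrow> nat \<Rightarrow> 'a::euclidean_space" and cr :: "'a \<Rightarrow> 'a \<Rightarrow> 'b::real_inner"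
  assumes "nb_cluster_setting n m t0 T q qd G" and "bounded_bilinear cr"
    and "\<And>x v. (x \<bullet> v)^2 + (norm (cr x v))^2 \<le> (norm x)^2 * (norm v)^2"
  shows "(\<lambda>t. norm (ang_mom0 cr m G q qd t)) \<in> O[at_left T](\<lambda>t. \<bar>T - t\<bar> powr (7/3)) \<and>
      (\<exists>dmu. (\<forall>t\<in>{t0<..<T}. (ang_mom0 cr m G q qd has_vector_derivative dmu t) (at t)) \<and>
             (\<lambda>t. norm (dmu t)) \<in> O[at_left T](\<lambda>t. \<bar>T - t\<bar> powr (4/3)))"
proof -
  obtain qdd L LG where "cluster_collision n m t0 T q qd qdd G L LG cr"
    using cluster_collision_of_setting[OF assms] by blast
  then interpret cluster_collision n m t0 T q qd qdd G L LG cr .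
  show ?thesis using ang_mom0_bigo ang_mom0_deriv by blast
qed

lemma bounded_bilinear_cross2: "bounded_bilinear cross2"
proof -
  have "bilinear cross2"
    by (auto simp: bilinear_def cross2_def algebra_simps intro!: linearI)
  then show ?thesis by (simp add: bilinear_conv_bounded_bilinear)
qed

lemma cross2_lagrange: "(x \<bullet> v)^2 + (norm (cross2 x v))^2 = (norm x)^2 * (norm v)^2"
proof -
  have "(x \<bullet> v)^2 + (norm (cross2 x v))^2 = (x \<bullet> x) * (v \<bullet> v)"
    by (simp add: cross2_def inner_vec_def sum_2 power2_eq_square algebra_simps)
  then show ?thesis by (simp add: power2_norm_eq_inner)
qed

lemma bounded_bilinear_cross3: "bounded_bilinear cross3"
  using bilinear_cross by (simp add: bilinear_conv_bounded_bilinear)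

lemma cross3_lagrange: "(x \<bullet> v)^2 + (norm (cross3 x v))^2 = (norm x)^2 * (norm v)^2"
  using norm_cross_dot[of x v] by (simp add: power_mult_distrib)

theorem theoremB5:
  shows
  "(\<forall>n m t0 T (q :: real \<Rightarrow> nat \<Rightarrow> real^2) qd G.
      nb_cluster_setting n m t0 T q qd G \<longrightarrow>
      (\<lambda>t. norm (ang_mom0 cross2 m G q qd t)) \<in> O[at_left T](\<lambda>t. \<bar>T - t\<bar> powr (7/3)) \<and>
      (\<exists>dmu. (\<forall>t\<in>{t0<..<T}. (ang_mom0 cross2 m G q qd has_vector_derivative dmu t) (at t)) \<and>
             (\<lambda>t. norm (dmu t)) \<in> O[at_left T](\<lambda>t. \<bar>T - t\<bar> powr (4/3)))) \<and>
   (\<forall>n m t0 T (q :: real \<Rightarrow> nat \<Rightarrow> real^3) qd G.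
      nb_cluster_setting n m t0 T q qd G \<longrightarrow>
      (\<lambda>t. norm (ang_mom0 cross3 m G q qd t)) \<in> O[at_left T](\<lambda>t. \<bar>T - t\<bar> powr (7/3)) \<and>
      (\<exists>dmu. (\<forall>t\<in>{t0<..<T}. (ang_mom0 cross3 m G q qd has_vector_derivative dmu t) (at t)) \<and>
             (\<lambda>t. norm (dmu t)) \<in> O[at_left T](\<lambda>t. \<bar>T - t\<bar> powr (4/3))))"
  using ang_mom0_asymptotics[OF _ bounded_bilinear_cross2 eq_refl[OF cross2_lagrange]]
    ang_mom0_asymptotics[OF _ bounded_bilinear_cross3 eq_refl[OF cross3_lagrange]]
  by blast

end
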